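(* Let $\mathcal{F}$ be a homomorphism distinguishing closed class of simple graphs. Then $\mathcal{F}$ is minor-closed if and only if $\equiv_{\mathcal{F}}$ is preserved under taking complements, i.e.\ for all simple graphs $G$ and $H$ it holds that $G\equiv_{\mathcal{F}} H$ if and only if $\overline{G}\equiv_{\mathcal{F}}\overline{H}$.
   Context: All graphs are finite, undirected, without multiple edges; simple means without loops. $\hom(F,G)$ denotes the number of homomorphisms from $F$ to $G$ (maps on vertices preserving adjacency and loops). For a class $\mathcal{F}$ of graphs, $G\equiv_{\mathcal{F}}H$ means $\hom(F,G)=\hom(F,H)$ for all $F\in\mathcal{F}$. The homomorphism distinguishing closure $\mathrm{cl}(\mathcal{F})$ is the class of all simple graphs $K$ such that for all simple graphs $G,H$, $G\equiv_{\mathcal{F}}H$ implies $\hom(K,G)=\hom(K,H)$; $\mathcal{F}$ is homomorphism distinguishing closed if $\mathrm{cl}(\mathcal{F})=\mathcal{F}$. $\overline{G}$ denotes the complement of a simple graph $G$ (same vertices, $E(\overline G)=\binom{V(G)}{2}\setminus E(G)$). A minor of a simple graph $F$ is a subgraph of a graph obtained from $F$ by contracting edges, where $F'$ is obtained from $F$ by contracting edges if there is a partition $\mathcal{P}$ of $V(F)$ with $F[P]$ connected for all $P\in\mathcal{P}$ and $F'\cong F/\mathcal{P}$ (the quotient with vertex set $\mathcal{P}$ and an edge $PQ$, $P\ne Q$, iff some $p\in P$, $q\in Q$ are adjacent in $F$). *)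

theory Defs
  imports "HOL-Library.FuncSet"
begin

type_synonym 'a graph = "'a set \<times> 'a set set"

definition verts :: "'a graph \<Rightarrow> 'a set" where "verts G = fst G"
definition edges :: "'a graph \<Rightarrow> 'a set set" where "edges G = snd G"

definition simple_graph :: "'a graph \<Rightarrow> bool" where
  "simple_graph G \<longleftrightarrow> finite (verts G) \<and>
     (\<forall>e\<in>edges G. \<exists>u v. u \<noteq> v \<and> u \<in> verts G \<and> v \<in> verts G \<and> e = {u, v})"

definition homs :: "'a graph \<Rightarrow> 'b graph \<Rightarrow> ('a \<Rightarrow> 'b) set" where
  "homs F G = {f \<in> verts F \<rightarrow>\<^sub>E verts G.
      \<forall>u\<in>verts F. \<forall>v\<in>verts F. {u, v} \<in> edges F \<longrightarrow> {f u, f v} \<in> edges G}"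

definition hom_count :: "'a graph \<Rightarrow> 'b graph \<Rightarrow> nat" where
  "hom_count F G = card (homs F G)"

text \<open>Graph classes are sets of graphs on vertex type nat (every finite graph
  is isomorphic to one of these).\<close>
definition hom_equiv :: "nat graph set \<Rightarrow> nat graph \<Rightarrow> nat graph \<Rightarrow> bool" where
  "hom_equiv \<F> G H \<longleftrightarrow> (\<forall>F\<in>\<F>. hom_count F G = hom_count F H)"

definition hom_closure :: "nat graph set \<Rightarrow> nat graph set" where
  "hom_closure \<F> = {K. simple_graph K \<and>
     (\<forall>G H. simple_graph G \<longrightarrow> simple_graph H \<longrightarrow> hom_equiv \<F> G H \<longrightarrow>
            hom_count K G = hom_count K H)}"

definition hom_dist_closed :: "nat graph set \<Rightarrow> bool" where
  "hom_dist_closed \<F> \<longleftrightarrow> hom_closure \<F> = \<F>"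

definition complement :: "'a graph \<Rightarrow> 'a graph" where
  "complement G = (verts G,
     {{u, v} | u v. u \<in> verts G \<and> v \<in> verts G \<and> u \<noteq> v \<and> {u, v} \<notin> edges G})"

definition graph_iso :: "'a graph \<Rightarrow> 'b graph \<Rightarrow> bool" where
  "graph_iso A B \<longleftrightarrow> (\<exists>f. bij_betw f (verts A) (verts B) \<and>
     (\<forall>u\<in>verts A. \<forall>v\<in>verts A. {u, v} \<in> edges A \<longleftrightarrow> {f u, f v} \<in> edges B))"

definition subgraph :: "'a graph \<Rightarrow> 'a graph \<Rightarrow> bool" where
  "subgraph S G \<longleftrightarrow> simple_graph S \<and> verts S \<subseteq> verts G \<and> edges S \<subseteq> edges G"

definition is_partition :: "'a set set \<Rightarrow> 'a set \<Rightarrow> bool" where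
  "is_partition \<P> V \<longleftrightarrow> \<Union>\<P> = V \<and> {} \<notin> \<P> \<and>
     (\<forall>P\<in>\<P>. \<forall>Q\<in>\<P>. P \<noteq> Q \<longrightarrow> P \<inter> Q = {})"

definition induced_connected :: "'a graph \<Rightarrow> 'a set \<Rightarrow> bool" where
  "induced_connected F P \<longleftrightarrow> P \<noteq> {} \<and> P \<subseteq> verts F \<and>
     (\<forall>u\<in>P. \<forall>v\<in>P. (\<lambda>x y. x \<in> P \<and> y \<in> P \<and> {x, y} \<in> edges F)\<^sup>*\<^sup>* u v)"

definition quotient_graph :: "'a graph \<Rightarrow> 'a set set \<Rightarrow> 'a set graph" where
  "quotient_graph F \<P> = (\<P>,
     {{P, Q} | P Q. P \<in> \<P> \<and> Q \<in> \<P> \<and> P \<noteq> Q \<and>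
        (\<exists>p\<in>P. \<exists>q\<in>Q. {p, q} \<in> edges F)})"

definition is_minor :: "'b graph \<Rightarrow> 'a graph \<Rightarrow> bool" where
  "is_minor M F \<longleftrightarrow> (\<exists>\<P> S. is_partition \<P> (verts F) \<and>
     (\<forall>P\<in>\<P>. induced_connected F P) \<and>
     subgraph S (quotient_graph F \<P>) \<and> graph_iso M S)"

definition minor_closed :: "nat graph set \<Rightarrow> bool" where
  "minor_closed \<F> \<longleftrightarrow> (\<forall>F\<in>\<F>. \<forall>M. simple_graph M \<longrightarrow> is_minor M F \<longrightarrow> M \<in> \<F>)"

end

(* Write collapse_count F T A X for the number of maps V(F) -> V(X) that contract the edges
   in T and send the remaining edges of A to edges.  Contracting the components of T shows that
   such a count either vanishes on all simple graphs or equals hom(M, -) for a minor M of F.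
   Conversely, for a minor M of F with branch sets \<P>, taking for T the edges inside the
   branch sets gives hom(M, X) * |V(X)|^k, the factor accounting for unused branch sets.

   A map sends an edge of F to an edge of the complement of X iff it neither contracts it nor
   sends it to an edge of X.  Moebius inversion over sets of edges therefore writes
   hom(F, complement X) in terms of collapse counts of F, so for a minor-closed class the
   equivalence is preserved under complements.

   If, conversely, the equivalence is preserved under complements, then, being preserved under
   tensor products as well, it is preserved by X |-> complement (complement X \<times> L), where L
   is V(F) with a loop at every vertex and with the edges A0 of F.  The hom count from F into
   this gadget, evaluated at X = G \<times> K, is a bilinear pairing of the collapse-count vectors of
   G and of K.  Collapse counts are multiplicative in K, so Artin's linear independence of
   distinct multiplicative functions shows that the collapse counts of F at G are invariant.
   By the first paragraph every minor of F then lies in the homomorphism distinguishing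
   closure, which is the class itself. *)

theory Submission
  imports Defs "HOL-Library.Nat_Bijection"
begin

section \<open>Simple graphs\<close>

lemma verts_pair [simp]: "verts (V, E) = V"
  unfolding verts_def by simp

lemma edges_pair [simp]: "edges (V, E) = E"
  unfolding edges_def by simp

lemma graph_eqI: "verts G = verts H \<Longrightarrow> edges G = edges H \<Longrightarrow> G = H"
  unfolding verts_def edges_def by (simp add: prod_eq_iff)

lemma simple_graph_edgeE:
  assumes "simple_graph G" "e \<in> edges G"
  obtains u v where "u \<noteq> v" "u \<in> verts G" "v \<in> verts G" "e = {u, v}"
  using assms unfolding simple_graph_def by blast

lemma simple_graph_edgeD:
  assumes "simple_graph G" "{u, v} \<in> edges G"
  shows "u \<noteq> v" "u \<in> verts G" "v \<in> verts G"
  using assms unfolding simple_graph_def by (auto simp: doubleton_eq_iff)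

lemma simple_graph_singleton_notin_edges: "simple_graph G \<Longrightarrow> {a} \<notin> edges G"
  using simple_graph_edgeD[of G a a] by auto

lemma simple_graph_finite_verts: "simple_graph G \<Longrightarrow> finite (verts G)"
  unfolding simple_graph_def by simp

lemma simple_graph_finite_edges:
  assumes "simple_graph G"
  shows "finite (edges G)"
proof (rule finite_subset)
  show "edges G \<subseteq> Pow (verts G)"
    using assms unfolding simple_graph_def by auto
qed (simp add: assms simple_graph_finite_verts)

lemma verts_complement [simp]: "verts (complement X) = verts X"
  unfolding complement_def by simp

lemma edge_complement_iff:
  assumes "u \<in> verts X" "v \<in> verts X"
  shows "{u, v} \<in> edges (complement X) \<longleftrightarrow> u \<noteq> v \<and> {u, v} \<notin> edges X"
  using assms unfolding complement_def by (auto simp: doubleton_eq_iff insert_commute)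

lemma simple_graph_complement: "simple_graph X \<Longrightarrow> simple_graph (complement X)"
  unfolding simple_graph_def complement_def by auto

lemma complement_complement:
  assumes "simple_graph X"
  shows "complement (complement X) = X"
proof (rule graph_eqI)
  show "edges (complement (complement X)) = edges X"
  proof (intro equalityI subsetI)
    fix e assume "e \<in> edges (complement (complement X))"
    then obtain u v where "u \<in> verts X" "v \<in> verts X" "u \<noteq> v" "{u, v} \<notin> edges (complement X)" "e = {u, v}"
      unfolding complement_def[of "complement X"] by auto
    then show "e \<in> edges X" using edge_complement_iff by metis
  next
    fix e assume "e \<in> edges X"
    with assms obtain u v where uv: "u \<noteq> v" "u \<in> verts X" "v \<in> verts X" "e = {u, v}"
      by (rule simple_graph_edgeE)
    with \<open>e \<in> edges X\<close> have "{u, v} \<notin> edges (complement X)"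
      using edge_complement_iff by metis
    with uv show "e \<in> edges (complement (complement X))"
      unfolding complement_def[of "complement X"] by auto
  qed
qed simp

lemma hom_count_graph_iso:
  assumes "graph_iso M S"
  shows "hom_count M X = hom_count S X"
proof -
  obtain f where f: "bij_betw f (verts M) (verts S)"
    and fe: "\<forall>u\<in>verts M. \<forall>v\<in>verts M. {u, v} \<in> edges M \<longleftrightarrow> {f u, f v} \<in> edges S"
    using assms unfolding graph_iso_def by blast
  let ?f' = "inv_into (verts M) f"
  have f': "bij_betw ?f' (verts S) (verts M)"
    using f by (rule bij_betw_inv_into)
  have ff': "\<And>w. w \<in> verts S \<Longrightarrow> f (?f' w) = w"
    using f by (simp add: bij_betw_inv_into_right)
  have "bij_betw (\<lambda>\<phi>. \<lambda>v\<in>verts M. \<phi> (f v)) (homs S X) (homs M X)"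
  proof (rule bij_betw_byWitness[where f' = "\<lambda>\<psi>. \<lambda>w\<in>verts S. \<psi> (?f' w)"])
    show "\<forall>\<phi>\<in>homs S X. (\<lambda>w\<in>verts S. (\<lambda>v\<in>verts M. \<phi> (f v)) (?f' w)) = \<phi>"
      using f' ff' unfolding homs_def by (auto simp: fun_eq_iff PiE_def extensional_def bij_betw_def)
    show "\<forall>\<psi>\<in>homs M X. (\<lambda>v\<in>verts M. (\<lambda>w\<in>verts S. \<psi> (?f' w)) (f v)) = \<psi>"
      using f unfolding homs_def
      by (auto simp: fun_eq_iff PiE_def extensional_def bij_betw_def)
    show "(\<lambda>\<phi>. \<lambda>v\<in>verts M. \<phi> (f v)) ` homs S X \<subseteq> homs M X"
      using bij_betwE[OF f] fe unfolding homs_def by (auto simp: PiE_iff)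
    show "(\<lambda>\<psi>. \<lambda>w\<in>verts S. \<psi> (?f' w)) ` homs M X \<subseteq> homs S X"
    proof (clarsimp simp: homs_def PiE_iff)
      fix \<psi> assume \<psi>: "\<forall>v\<in>verts M. \<psi> v \<in> verts X" "\<psi> \<in> extensional (verts M)"
        "\<forall>u\<in>verts M. \<forall>v\<in>verts M. {u, v} \<in> edges M \<longrightarrow> {\<psi> u, \<psi> v} \<in> edges X"
      show "(\<forall>w\<in>verts S. \<psi> (?f' w) \<in> verts X) \<and>
        (\<forall>u\<in>verts S. \<forall>v\<in>verts S. {u, v} \<in> edges S \<longrightarrow> {\<psi> (?f' u), \<psi> (?f' v)} \<in> edges X)"
        using \<psi> fe ff' bij_betwE[OF f'] by metis
    qed
  qed
  then show ?thesis
    unfolding hom_count_def by (simp add: bij_betw_same_card)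
qed

lemma ex_nat_graph_iso:
  fixes S :: "'a graph"
  assumes S: "simple_graph S"
  obtains M :: "nat graph" where "simple_graph M" "graph_iso M S"
proof -
  define n where "n = card (verts S)"
  obtain b where b: "bij_betw b {0..<n} (verts S)"
    using ex_bij_betw_nat_finite[OF simple_graph_finite_verts[OF S]] unfolding n_def by blast
  define M :: "nat graph" where "M = ({0..<n}, {{i, j} | i j. i < n \<and> j < n \<and> {b i, b j} \<in> edges S})"
  have "graph_iso M S"
    unfolding graph_iso_def
  proof (intro exI conjI ballI)
    show "bij_betw b (verts M) (verts S)"
      using b unfolding M_def by simp
    fix u v assume "u \<in> verts M" "v \<in> verts M"
    then show "{u, v} \<in> edges M \<longleftrightarrow> {b u, b v} \<in> edges S"
      unfolding M_def by (auto simp: doubleton_eq_iff insert_commute)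
  qed
  moreover have "simple_graph M"
    unfolding simple_graph_def
  proof (intro conjI ballI)
    show "finite (verts M)" unfolding M_def by simp
    fix e assume "e \<in> edges M"
    then obtain i j where ij: "e = {i, j}" "i < n" "j < n" "{b i, b j} \<in> edges S"
      unfolding M_def by auto
    then have "i \<noteq> j" using simple_graph_edgeD[OF S] by blast
    with ij show "\<exists>u v. u \<noteq> v \<and> u \<in> verts M \<and> v \<in> verts M \<and> e = {u, v}"
      unfolding M_def by auto
  qed
  ultimately show ?thesis using that by blast
qed

lemma hom_count_add_isolated:
  assumes "finite D" "D \<inter> V = {}" "\<forall>u v. {u, v} \<in> E \<longrightarrow> u \<in> V \<and> v \<in> V"
  shows "hom_count (V \<union> D, E) X = hom_count (V, E) X * card (verts X) ^ card D"
  using assms(1,2)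
proof (induction D rule: finite_induct)
  case empty
  then show ?case by simp
next
  case (insert w D)
  have w: "w \<notin> V \<union> D" using insert by auto
  let ?H = "homs (V \<union> D, E) X"
  have "bij_betw (\<lambda>(f, a). f(w := a)) (?H \<times> verts X) (homs (insert w (V \<union> D), E) X)"
  proof (rule bij_betw_byWitness[where f' = "\<lambda>f. (f(w := undefined), f w)"])
    show "\<forall>p\<in>?H \<times> verts X. (\<lambda>f. (f(w := undefined), f w)) ((\<lambda>(f, a). f(w := a)) p) = p"
      using w unfolding homs_def by (auto simp: PiE_def extensional_def fun_eq_iff)
    show "\<forall>f\<in>homs (insert w (V \<union> D), E) X. (\<lambda>(f, a). f(w := a)) (f(w := undefined), f w) = f"
      by simp
    show "(\<lambda>(f, a). f(w := a)) ` (?H \<times> verts X) \<subseteq> homs (insert w (V \<union> D), E) X"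
      using w assms(3) unfolding homs_def by (fastforce simp: PiE_iff extensional_def)
    show "(\<lambda>f. (f(w := undefined), f w)) ` homs (insert w (V \<union> D), E) X \<subseteq> ?H \<times> verts X"
      using w assms(3) unfolding homs_def by (fastforce simp: PiE_iff extensional_def)
  qed
  then have "hom_count (insert w (V \<union> D), E) X = card (?H \<times> verts X)"
    unfolding hom_count_def by (simp add: bij_betw_same_card)
  also have "\<dots> = hom_count (V \<union> D, E) X * card (verts X)"
    unfolding hom_count_def by (simp add: card_cartesian_product)
  finally show ?case
    using insert by simp
qed

section \<open>Partially contracting maps\<close>

definition collapse_homs :: "'a graph \<Rightarrow> 'a set set \<Rightarrow> 'a set set \<Rightarrow> 'b graph \<Rightarrow> ('a \<Rightarrow> 'b) set" where
  "collapse_homs F T A X = {g \<in> verts F \<rightarrow>\<^sub>E verts X.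
     (\<forall>e\<in>T. \<exists>a. g ` e = {a}) \<and> (\<forall>e\<in>A - T. g ` e \<in> edges X)}"

definition collapse_count :: "'a graph \<Rightarrow> 'a set set \<Rightarrow> 'a set set \<Rightarrow> 'b graph \<Rightarrow> nat" where
  "collapse_count F T A X = card (collapse_homs F T A X)"

lemma finite_collapse_homs:
  "finite (verts F) \<Longrightarrow> finite (verts X) \<Longrightarrow> finite (collapse_homs F T A X)"
  unfolding collapse_homs_def by (rule finite_subset[of _ "verts F \<rightarrow>\<^sub>E verts X"]) (auto simp: finite_PiE)

lemma collapse_homs_altdef:
  assumes "simple_graph F" "T \<subseteq> A" "A \<subseteq> edges F"
  shows "collapse_homs F T A X = {g \<in> verts F \<rightarrow>\<^sub>E verts X. \<forall>u\<in>verts F. \<forall>v\<in>verts F.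
           ({u, v} \<in> T \<longrightarrow> g u = g v) \<and> ({u, v} \<in> A - T \<longrightarrow> {g u, g v} \<in> edges X)}"
  (is "?L = ?R")
proof (rule set_eqI iffI)+
  fix g assume g: "g \<in> ?L"
  have T: "\<forall>e\<in>T. \<exists>a. g ` e = {a}" and AT: "\<forall>e\<in>A - T. g ` e \<in> edges X"
    and g': "g \<in> verts F \<rightarrow>\<^sub>E verts X"
    using g by (simp_all add: collapse_homs_def)
  have "g u = g v" if "{u, v} \<in> T" for u v
    using bspec[OF T that] by auto
  moreover have "{g u, g v} \<in> edges X" if "{u, v} \<in> A - T" for u v
    using bspec[OF AT that] by simp
  ultimately show "g \<in> ?R"
    using g' by blast
next
  fix g assume "g \<in> ?R"
  then have g': "g \<in> verts F \<rightarrow>\<^sub>E verts X"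
    and gT: "\<And>u v. u \<in> verts F \<Longrightarrow> v \<in> verts F \<Longrightarrow> {u, v} \<in> T \<Longrightarrow> g u = g v"
    and gA: "\<And>u v. u \<in> verts F \<Longrightarrow> v \<in> verts F \<Longrightarrow> {u, v} \<in> A - T \<Longrightarrow> {g u, g v} \<in> edges X"
    by blast+
  have "\<exists>a. g ` e = {a}" if e: "e \<in> T" for e
  proof -
    obtain u v where "u \<in> verts F" "v \<in> verts F" "e = {u, v}"
      using simple_graph_edgeE[OF assms(1)] e assms(2,3) by blast
    with gT e show ?thesis by auto
  qed
  moreover have "g ` e \<in> edges X" if e: "e \<in> A - T" for e
  proof -
    obtain u v where "u \<in> verts F" "v \<in> verts F" "e = {u, v}"
      using simple_graph_edgeE[OF assms(1)] e assms(3) by blast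
    with gA e show ?thesis by auto
  qed
  ultimately show "g \<in> ?L"
    using g' unfolding collapse_homs_def by blast
qed

lemma homs_eq_collapse_homs: "simple_graph F \<Longrightarrow> homs F X = collapse_homs F {} (edges F) X"
  unfolding homs_def by (simp add: collapse_homs_altdef)

lemma hom_count_eq_collapse_count: "simple_graph F \<Longrightarrow> hom_count F X = collapse_count F {} (edges F) X"
  unfolding hom_count_def collapse_count_def by (simp add: homs_eq_collapse_homs)

lemma collapse_count_empty: "finite (verts F) \<Longrightarrow> collapse_count F {} {} X = card (verts X) ^ card (verts F)"
  unfolding collapse_count_def collapse_homs_def by (simp add: card_PiE)

definition eq_or_adj :: "'b graph \<Rightarrow> ('a \<Rightarrow> 'b) \<Rightarrow> 'a set \<Rightarrow> bool" where
  "eq_or_adj X g e \<longleftrightarrow> (\<exists>a. g ` e = {a}) \<or> g ` e \<in> edges X"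

definition relaxed_homs :: "'a graph \<Rightarrow> 'a set set \<Rightarrow> 'a set set \<Rightarrow> 'b graph \<Rightarrow> ('a \<Rightarrow> 'b) set" where
  "relaxed_homs F N A X = {g \<in> verts F \<rightarrow>\<^sub>E verts X.
     (\<forall>e\<in>N. eq_or_adj X g e) \<and> (\<forall>e\<in>A - N. g ` e \<in> edges X)}"

lemma relaxed_homs_eq_UN_collapse_homs:
  assumes "N \<subseteq> A"
  shows "relaxed_homs F N A X = (\<Union>T\<in>Pow N. collapse_homs F T A X)"
proof (intro equalityI subsetI)
  fix g assume g: "g \<in> relaxed_homs F N A X"
  have "g ` e \<in> edges X" if "e \<in> A - {e\<in>N. \<exists>a. g ` e = {a}}" for e
    using g that unfolding relaxed_homs_def eq_or_adj_def by (cases "e \<in> N") auto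
  with g have "g \<in> collapse_homs F {e\<in>N. \<exists>a. g ` e = {a}} A X"
    unfolding relaxed_homs_def collapse_homs_def by blast
  then show "g \<in> (\<Union>T\<in>Pow N. collapse_homs F T A X)"
    by (rule UN_I[rotated]) auto
next
  fix g assume "g \<in> (\<Union>T\<in>Pow N. collapse_homs F T A X)"
  then obtain T where T: "T \<subseteq> N" "g \<in> collapse_homs F T A X"
    by blast
  have "eq_or_adj X g e" if "e \<in> N" for e
    using T assms that unfolding collapse_homs_def eq_or_adj_def by (cases "e \<in> T") auto
  moreover have "g ` e \<in> edges X" if "e \<in> A - N" for e
    using T that unfolding collapse_homs_def by blast
  moreover have "g \<in> verts F \<rightarrow>\<^sub>E verts X"
    using T unfolding collapse_homs_def by blast
  ultimately show "g \<in> relaxed_homs F N A X"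
    unfolding relaxed_homs_def by simp
qed

text \<open>In a simple graph no edge is a singleton, so a map determines which edges it contracts.\<close>
lemma collapse_homs_disjoint:
  assumes "simple_graph X" "T1 \<subseteq> A" "T2 \<subseteq> A" "T1 \<noteq> T2"
  shows "collapse_homs F T1 A X \<inter> collapse_homs F T2 A X = {}"
proof -
  have "g \<notin> collapse_homs F T' A X"
    if g: "g \<in> collapse_homs F T A X" and e: "e \<in> T" "e \<notin> T'" "T \<subseteq> A" for g T T' e
  proof
    obtain a where "g ` e = {a}"
      using g e unfolding collapse_homs_def by blast
    moreover assume "g \<in> collapse_homs F T' A X"
    then have "g ` e \<in> edges X"
      using e unfolding collapse_homs_def by blast
    ultimately show False
      using simple_graph_singleton_notin_edges[OF assms(1)] by simp
  qed
  with assms(2-4) show ?thesis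
    by blast
qed

lemma card_relaxed_homs:
  assumes "simple_graph X" "finite (verts F)" "finite (verts X)" "finite N" "N \<subseteq> A"
  shows "card (relaxed_homs F N A X) = (\<Sum>T\<in>Pow N. collapse_count F T A X)"
  unfolding relaxed_homs_eq_UN_collapse_homs[OF assms(5)] collapse_count_def
proof (rule card_UN_disjoint)
  show "finite (Pow N)"
    using assms(4) by simp
  show "\<forall>T\<in>Pow N. finite (collapse_homs F T A X)"
    using finite_collapse_homs[OF assms(2,3)] by blast
  show "\<forall>T1\<in>Pow N. \<forall>T2\<in>Pow N. T1 \<noteq> T2 \<longrightarrow> collapse_homs F T1 A X \<inter> collapse_homs F T2 A X = {}"
  proof (intro ballI impI)
    fix T1 T2 assume "T1 \<in> Pow N" "T2 \<in> Pow N" "T1 \<noteq> T2"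
    with assms(5) show "collapse_homs F T1 A X \<inter> collapse_homs F T2 A X = {}"
      by (intro collapse_homs_disjoint[OF assms(1)]) auto
  qed
qed

section \<open>Tensor products\<close>

text \<open>The tensor (categorical) product, with vertex pairs encoded as natural numbers so that it
  remains a graph on \<open>nat\<close>. The second factor may have loops \<open>{b}\<close>.\<close>
definition tensor_graph :: "nat graph \<Rightarrow> nat graph \<Rightarrow> nat graph" where
  "tensor_graph X L = (prod_encode ` (verts X \<times> verts L),
     {{prod_encode (a, b), prod_encode (c, d)} | a b c d. a \<in> verts X \<and> c \<in> verts X \<and>
        b \<in> verts L \<and> d \<in> verts L \<and> {a, c} \<in> edges X \<and> {b, d} \<in> edges L})"

lemma verts_tensor_graph: "verts (tensor_graph X L) = prod_encode ` (verts X \<times> verts L)"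
  unfolding tensor_graph_def by simp

lemma edge_tensor_graph_iff:
  "{prod_encode (a, b), prod_encode (c, d)} \<in> edges (tensor_graph X L) \<longleftrightarrow>
     a \<in> verts X \<and> c \<in> verts X \<and> b \<in> verts L \<and> d \<in> verts L \<and> {a, c} \<in> edges X \<and> {b, d} \<in> edges L"
proof
  assume "{prod_encode (a, b), prod_encode (c, d)} \<in> edges (tensor_graph X L)"
  then obtain a' b' c' d' where
    eq: "{prod_encode (a, b), prod_encode (c, d)} = {prod_encode (a', b'), prod_encode (c', d')}" and
    p: "a' \<in> verts X \<and> c' \<in> verts X \<and> b' \<in> verts L \<and> d' \<in> verts L \<and> {a', c'} \<in> edges X \<and> {b', d'} \<in> edges L"
    unfolding tensor_graph_def by auto
  from eq have "(a = a' \<and> b = b' \<and> c = c' \<and> d = d') \<or> (a = c' \<and> b = d' \<and> c = a' \<and> d = b')"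
    by (auto simp: doubleton_eq_iff)
  with p show "a \<in> verts X \<and> c \<in> verts X \<and> b \<in> verts L \<and> d \<in> verts L \<and> {a, c} \<in> edges X \<and> {b, d} \<in> edges L"
    by (auto simp: insert_commute)
qed (auto simp: tensor_graph_def)

lemma simple_graph_tensor_graph:
  assumes "simple_graph X" "finite (verts L)"
  shows "simple_graph (tensor_graph X L)"
  unfolding simple_graph_def
proof (intro conjI ballI)
  show "finite (verts (tensor_graph X L))"
    using assms(2) simple_graph_finite_verts[OF assms(1)] unfolding verts_tensor_graph by simp
next
  fix e assume "e \<in> edges (tensor_graph X L)"
  then obtain a b c d where e: "e = {prod_encode (a, b), prod_encode (c, d)}" and
    p: "a \<in> verts X" "c \<in> verts X" "b \<in> verts L" "d \<in> verts L" "{a, c} \<in> edges X"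
    unfolding tensor_graph_def by auto
  have "a \<noteq> c"
    using simple_graph_edgeD[OF assms(1) p(5)] by simp
  with e p show "\<exists>u v. u \<noteq> v \<and> u \<in> verts (tensor_graph X L) \<and> v \<in> verts (tensor_graph X L) \<and> e = {u, v}"
    unfolding verts_tensor_graph by (intro exI[of _ "prod_encode (a, b)"] exI[of _ "prod_encode (c, d)"]) auto
qed

lemma card_PiE_prod_encode:
  assumes "finite I" "finite A" "finite B"
  shows "card {f \<in> I \<rightarrow>\<^sub>E prod_encode ` (A \<times> B). P f} =
    (\<Sum>h\<in>I \<rightarrow>\<^sub>E B. card {g \<in> I \<rightarrow>\<^sub>E A. P (\<lambda>x\<in>I. prod_encode (g x, h x))})"
proof -
  let ?S = "Sigma (I \<rightarrow>\<^sub>E B) (\<lambda>h. {g \<in> I \<rightarrow>\<^sub>E A. P (\<lambda>x\<in>I. prod_encode (g x, h x))})"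
  let ?pair = "\<lambda>(h, g). \<lambda>x\<in>I. prod_encode (g x, h x)"
  let ?split = "\<lambda>f. (\<lambda>x\<in>I. snd (prod_decode (f x)), \<lambda>x\<in>I. fst (prod_decode (f x)))"
  have "bij_betw ?pair ?S {f \<in> I \<rightarrow>\<^sub>E prod_encode ` (A \<times> B). P f}"
  proof (rule bij_betw_byWitness[where f' = ?split])
    show "\<forall>p\<in>?S. ?split (?pair p) = p"
      by (auto simp: fun_eq_iff PiE_def extensional_def)
    show "\<forall>f\<in>{f \<in> I \<rightarrow>\<^sub>E prod_encode ` (A \<times> B). P f}. ?pair (?split f) = f"
      by (auto simp: fun_eq_iff PiE_def extensional_def)
    show "?pair ` ?S \<subseteq> {f \<in> I \<rightarrow>\<^sub>E prod_encode ` (A \<times> B). P f}"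
      by (auto simp: PiE_def Pi_def)
    show "?split ` {f \<in> I \<rightarrow>\<^sub>E prod_encode ` (A \<times> B). P f} \<subseteq> ?S"
    proof
      fix p assume "p \<in> ?split ` {f \<in> I \<rightarrow>\<^sub>E prod_encode ` (A \<times> B). P f}"
      then obtain f where f: "f \<in> I \<rightarrow>\<^sub>E prod_encode ` (A \<times> B)" "P f" and p: "p = ?split f"
        by blast
      have "(\<lambda>x\<in>I. prod_encode ((\<lambda>x\<in>I. fst (prod_decode (f x))) x, (\<lambda>x\<in>I. snd (prod_decode (f x))) x)) = f"
        using f(1) by (auto simp: fun_eq_iff PiE_def extensional_def)
      with f show "p \<in> ?S"
        unfolding p by (auto simp: PiE_def Pi_def)
    qed
  qed
  then have "card {f \<in> I \<rightarrow>\<^sub>E prod_encode ` (A \<times> B). P f} = card ?S"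
    by (simp add: bij_betw_same_card)
  also have "\<dots> = (\<Sum>h\<in>I \<rightarrow>\<^sub>E B. card {g \<in> I \<rightarrow>\<^sub>E A. P (\<lambda>x\<in>I. prod_encode (g x, h x))})"
    using assms by (intro card_SigmaI) (auto simp: finite_PiE)
  finally show ?thesis .
qed

lemma pair_in_collapse_homs_tensor_graph_iff:
  assumes F: "simple_graph F" "T \<subseteq> A" "A \<subseteq> edges F"
    and g: "g \<in> verts F \<rightarrow>\<^sub>E verts X" and h: "h \<in> verts F \<rightarrow>\<^sub>E verts L"
  shows "(\<lambda>x\<in>verts F. prod_encode (g x, h x)) \<in> collapse_homs F T A (tensor_graph X L) \<longleftrightarrow>
    g \<in> collapse_homs F T A X \<and> h \<in> collapse_homs F T A L"
proof -
  have "(\<lambda>x\<in>verts F. prod_encode (g x, h x)) \<in> verts F \<rightarrow>\<^sub>E verts (tensor_graph X L)"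
    using g h unfolding verts_tensor_graph by (auto simp: PiE_iff)
  moreover have "g u \<in> verts X" "h u \<in> verts L" if "u \<in> verts F" for u
    using g h that by (auto simp: PiE_iff)
  ultimately show ?thesis
    using g h unfolding collapse_homs_altdef[OF F]
    by (auto simp: edge_tensor_graph_iff prod_encode_eq)
qed

lemma collapse_count_tensor_graph:
  assumes F: "simple_graph F" "T \<subseteq> A" "A \<subseteq> edges F"
    and fin: "finite (verts X)" "finite (verts L)"
  shows "collapse_count F T A (tensor_graph X L) = collapse_count F T A X * collapse_count F T A L"
proof -
  let ?C = "collapse_homs F T A"
  have "collapse_count F T A (tensor_graph X L) =
      card {f \<in> verts F \<rightarrow>\<^sub>E prod_encode ` (verts X \<times> verts L). f \<in> ?C (tensor_graph X L)}"
    unfolding collapse_count_def by (rule arg_cong[where f = card])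
      (auto simp: collapse_homs_def verts_tensor_graph)
  also have "\<dots> = (\<Sum>h\<in>verts F \<rightarrow>\<^sub>E verts L.
      card {g \<in> verts F \<rightarrow>\<^sub>E verts X. (\<lambda>x\<in>verts F. prod_encode (g x, h x)) \<in> ?C (tensor_graph X L)})"
    using simple_graph_finite_verts[OF F(1)] fin by (rule card_PiE_prod_encode)
  also have "\<dots> = (\<Sum>h\<in>verts F \<rightarrow>\<^sub>E verts L. if h \<in> ?C L then card (?C X) else 0)"
  proof (rule sum.cong[OF refl])
    fix h assume h: "h \<in> verts F \<rightarrow>\<^sub>E verts L"
    have "{g \<in> verts F \<rightarrow>\<^sub>E verts X. (\<lambda>x\<in>verts F. prod_encode (g x, h x)) \<in> ?C (tensor_graph X L)} =
        {g \<in> verts F \<rightarrow>\<^sub>E verts X. g \<in> ?C X \<and> h \<in> ?C L}"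
      using pair_in_collapse_homs_tensor_graph_iff[OF F _ h, where X = X] by blast
    also have "\<dots> = (if h \<in> ?C L then ?C X else {})"
      unfolding collapse_homs_def[of F T A X] by auto
    finally have "{g \<in> verts F \<rightarrow>\<^sub>E verts X. (\<lambda>x\<in>verts F. prod_encode (g x, h x)) \<in> ?C (tensor_graph X L)} =
        (if h \<in> ?C L then ?C X else {})" .
    then show "card {g \<in> verts F \<rightarrow>\<^sub>E verts X. (\<lambda>x\<in>verts F. prod_encode (g x, h x)) \<in> ?C (tensor_graph X L)} =
        (if h \<in> ?C L then card (?C X) else 0)"
      by simp
  qed
  also have "\<dots> = card (?C L) * card (?C X)"
    using simple_graph_finite_verts[OF F(1)] fin
    by (simp add: sum.If_cases finite_PiE collapse_homs_def Int_def conj_commute)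
  finally show ?thesis
    unfolding collapse_count_def by (simp add: mult.commute)
qed

lemma hom_count_tensor_graph:
  assumes "simple_graph F" "finite (verts X)" "finite (verts L)"
  shows "hom_count F (tensor_graph X L) = hom_count F X * hom_count F L"
  using collapse_count_tensor_graph[OF assms(1) _ _ assms(2,3), of "{}" "edges F"] assms(1)
  by (simp add: hom_count_eq_collapse_count)

lemma hom_equiv_tensor_graph:
  assumes "\<forall>F\<in>\<F>. simple_graph F" "finite (verts X)" "finite (verts Y)" "finite (verts L)"
    and "hom_equiv \<F> X Y"
  shows "hom_equiv \<F> (tensor_graph X L) (tensor_graph Y L)"
  using assms unfolding hom_equiv_def by (simp add: hom_count_tensor_graph)

section \<open>The gadget\<close>

definition loop_graph :: "'a graph \<Rightarrow> 'a set set \<Rightarrow> 'a graph" where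
  "loop_graph F A\<^sub>0 = (verts F, (\<lambda>b. {b}) ` verts F \<union> A\<^sub>0)"

text \<open>A homomorphism from \<open>F\<close> into the gadget is a pair \<open>(g, h)\<close> of maps into \<open>X\<close> and into \<open>V(F)\<close>
  such that each edge of \<open>F\<close> sent by \<open>h\<close> into \<open>A\<^sub>0\<close> is sent by \<open>g\<close> to a vertex or an edge, each edge
  contracted by \<open>h\<close> is sent by \<open>g\<close> to an edge, and all other edges are unconstrained.\<close>
definition gadget :: "nat graph \<Rightarrow> nat set set \<Rightarrow> nat graph \<Rightarrow> nat graph" where
  "gadget F A\<^sub>0 X = complement (tensor_graph (complement X) (loop_graph F A\<^sub>0))"

definition edges_mapped_into :: "'a graph \<Rightarrow> 'b set set \<Rightarrow> ('a \<Rightarrow> 'b) \<Rightarrow> 'a set set" where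
  "edges_mapped_into F E h = {e \<in> edges F. h ` e \<in> E}"

lemma verts_gadget: "verts (gadget F A\<^sub>0 X) = prod_encode ` (verts X \<times> verts F)"
  unfolding gadget_def loop_graph_def by (simp add: verts_tensor_graph)

lemma edge_gadget_iff:
  assumes "a \<in> verts X" "c \<in> verts X" "b \<in> verts F" "d \<in> verts F"
  shows "{prod_encode (a, b), prod_encode (c, d)} \<in> edges (gadget F A\<^sub>0 X) \<longleftrightarrow>
    (a \<noteq> c \<or> b \<noteq> d) \<and> \<not> (a \<noteq> c \<and> {a, c} \<notin> edges X \<and> (b = d \<or> {b, d} \<in> A\<^sub>0))"
proof -
  have "prod_encode (a, b) \<in> verts (tensor_graph (complement X) (loop_graph F A\<^sub>0))"
    "prod_encode (c, d) \<in> verts (tensor_graph (complement X) (loop_graph F A\<^sub>0))"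
    using assms unfolding verts_tensor_graph loop_graph_def by auto
  moreover have "{b, d} \<in> edges (loop_graph F A\<^sub>0) \<longleftrightarrow> b = d \<or> {b, d} \<in> A\<^sub>0"
    unfolding loop_graph_def using assms(3,4) by (auto simp: doubleton_eq_iff)
  ultimately show ?thesis
    using assms unfolding gadget_def
    by (simp add: edge_complement_iff edge_tensor_graph_iff prod_encode_eq loop_graph_def)
qed

lemma pair_in_homs_gadget_iff:
  assumes F: "simple_graph F" and A\<^sub>0: "A\<^sub>0 \<subseteq> edges F" and X: "simple_graph X"
    and g: "g \<in> verts F \<rightarrow>\<^sub>E verts X" and h: "h \<in> verts F \<rightarrow>\<^sub>E verts F"
  shows "(\<lambda>x\<in>verts F. prod_encode (g x, h x)) \<in> homs F (gadget F A\<^sub>0 X) \<longleftrightarrow>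
    g \<in> relaxed_homs F (edges_mapped_into F A\<^sub>0 h) (edges_mapped_into F (edges (loop_graph F A\<^sub>0)) h) X"
proof -
  define N where "N = edges_mapped_into F A\<^sub>0 h"
  define A where "A = edges_mapped_into F (edges (loop_graph F A\<^sub>0)) h"
  have edge_iff: "{prod_encode (g u, h u), prod_encode (g v, h v)} \<in> edges (gadget F A\<^sub>0 X) \<longleftrightarrow>
      ({u, v} \<in> N \<longrightarrow> eq_or_adj X g {u, v}) \<and> ({u, v} \<in> A - N \<longrightarrow> g ` {u, v} \<in> edges X)"
    if uv: "{u, v} \<in> edges F" for u v
  proof -
    have u: "u \<in> verts F" "v \<in> verts F"
      using simple_graph_edgeD[OF F uv] by simp_all
    then have in_verts: "g u \<in> verts X" "g v \<in> verts X" "h u \<in> verts F" "h v \<in> verts F"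
      using g h by (auto simp: PiE_iff)
    have "{h u, h v} \<in> A\<^sub>0 \<Longrightarrow> h u \<noteq> h v"
      using A\<^sub>0 simple_graph_edgeD[OF F] by blast
    moreover have "{g u, g v} \<in> edges X \<Longrightarrow> g u \<noteq> g v"
      using simple_graph_edgeD[OF X] by blast
    moreover have "{u, v} \<in> N \<longleftrightarrow> {h u, h v} \<in> A\<^sub>0" "{u, v} \<in> A \<longleftrightarrow> h u = h v \<or> {h u, h v} \<in> A\<^sub>0"
      using uv u(1) h unfolding N_def A_def edges_mapped_into_def loop_graph_def
      by (auto simp: doubleton_eq_iff)
    ultimately show ?thesis
      unfolding edge_gadget_iff[OF in_verts] eq_or_adj_def by auto
  qed
  have "(\<lambda>x\<in>verts F. prod_encode (g x, h x)) \<in> homs F (gadget F A\<^sub>0 X) \<longleftrightarrow>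
      (\<forall>u\<in>verts F. \<forall>v\<in>verts F. {u, v} \<in> edges F \<longrightarrow>
        ({u, v} \<in> N \<longrightarrow> eq_or_adj X g {u, v}) \<and> ({u, v} \<in> A - N \<longrightarrow> g ` {u, v} \<in> edges X))"
    using g h edge_iff unfolding homs_def verts_gadget by (auto simp: PiE_iff)
  also have "\<dots> \<longleftrightarrow> (\<forall>e\<in>edges F. (e \<in> N \<longrightarrow> eq_or_adj X g e) \<and> (e \<in> A - N \<longrightarrow> g ` e \<in> edges X))"
    using simple_graph_edgeE[OF F] simple_graph_edgeD[OF F] by metis
  also have "\<dots> \<longleftrightarrow> g \<in> relaxed_homs F N A X"
    using g unfolding relaxed_homs_def N_def A_def edges_mapped_into_def by auto
  finally show ?thesis
    unfolding N_def A_def .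
qed

lemma hom_count_gadget:
  assumes F: "simple_graph F" and A\<^sub>0: "A\<^sub>0 \<subseteq> edges F" and X: "simple_graph X"
  shows "hom_count F (gadget F A\<^sub>0 X) = (\<Sum>h\<in>verts F \<rightarrow>\<^sub>E verts F.
    \<Sum>T\<in>Pow (edges_mapped_into F A\<^sub>0 h). collapse_count F T (edges_mapped_into F (edges (loop_graph F A\<^sub>0)) h) X)"
proof -
  let ?N = "edges_mapped_into F A\<^sub>0" and ?A = "edges_mapped_into F (edges (loop_graph F A\<^sub>0))"
  have fin: "finite (verts F)" "finite (verts X)"
    using F X by (simp_all add: simple_graph_finite_verts)
  have "hom_count F (gadget F A\<^sub>0 X) =
      card {f \<in> verts F \<rightarrow>\<^sub>E prod_encode ` (verts X \<times> verts F). f \<in> homs F (gadget F A\<^sub>0 X)}"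
    unfolding hom_count_def by (rule arg_cong[where f = card]) (auto simp: homs_def verts_gadget)
  also have "\<dots> = (\<Sum>h\<in>verts F \<rightarrow>\<^sub>E verts F. card {g \<in> verts F \<rightarrow>\<^sub>E verts X.
      (\<lambda>x\<in>verts F. prod_encode (g x, h x)) \<in> homs F (gadget F A\<^sub>0 X)})"
    using fin by (intro card_PiE_prod_encode) simp_all
  also have "\<dots> = (\<Sum>h\<in>verts F \<rightarrow>\<^sub>E verts F. card (relaxed_homs F (?N h) (?A h) X))"
  proof (rule sum.cong[OF refl])
    fix h assume h: "h \<in> verts F \<rightarrow>\<^sub>E verts F"
    have "{g \<in> verts F \<rightarrow>\<^sub>E verts X. (\<lambda>x\<in>verts F. prod_encode (g x, h x)) \<in> homs F (gadget F A\<^sub>0 X)} =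
        {g \<in> verts F \<rightarrow>\<^sub>E verts X. g \<in> relaxed_homs F (?N h) (?A h) X}"
      using pair_in_homs_gadget_iff[OF F A\<^sub>0 X _ h] by blast
    also have "\<dots> = relaxed_homs F (?N h) (?A h) X"
      unfolding relaxed_homs_def by blast
    finally show "card {g \<in> verts F \<rightarrow>\<^sub>E verts X. (\<lambda>x\<in>verts F. prod_encode (g x, h x)) \<in> homs F (gadget F A\<^sub>0 X)} =
        card (relaxed_homs F (?N h) (?A h) X)"
      by simp
  qed
  also have "\<dots> = (\<Sum>h\<in>verts F \<rightarrow>\<^sub>E verts F. \<Sum>T\<in>Pow (?N h). collapse_count F T (?A h) X)"
  proof (rule sum.cong[OF refl], rule card_relaxed_homs[OF X fin])
    fix h
    show "finite (?N h)"
      using simple_graph_finite_edges[OF F] unfolding edges_mapped_into_def by simp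
    show "?N h \<subseteq> ?A h"
      unfolding edges_mapped_into_def loop_graph_def by auto
  qed
  finally show ?thesis .
qed

text \<open>Artin's argument: a relation with \<open>\<phi>\<^sub>0\<close> and some \<open>\<phi>\<^sub>1 \<noteq> \<phi>\<^sub>0\<close> in its support yields, after
  evaluating at products with a \<open>y\<close> separating them and subtracting \<open>\<phi>\<^sub>1 y\<close> times the original
  relation, a relation with smaller support that still contains \<open>\<phi>\<^sub>0\<close>.\<close>
lemma multiplicative_functions_independent:
  fixes \<Phi> :: "('x \<Rightarrow> int) set"
  assumes fin: "finite \<Phi>" and ext: "\<Phi> \<subseteq> extensional S"
    and mult: "\<forall>x\<in>S. \<forall>y\<in>S. \<exists>z\<in>S. \<forall>\<phi>\<in>\<Phi>. \<phi> z = \<phi> x * \<phi> y"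
    and rel: "\<forall>x\<in>S. (\<Sum>\<phi>\<in>\<Phi>. b \<phi> * \<phi> x) = 0"
    and \<phi>\<^sub>0: "\<phi>\<^sub>0 \<in> \<Phi>" "x\<^sub>0 \<in> S" "\<phi>\<^sub>0 x\<^sub>0 \<noteq> 0"
  shows "b \<phi>\<^sub>0 = 0"
  using rel
proof (induction "card {\<phi>\<in>\<Phi>. b \<phi> \<noteq> 0}" arbitrary: b rule: less_induct)
  case less
  show "b \<phi>\<^sub>0 = 0"
  proof (rule ccontr)
    assume b\<^sub>0: "b \<phi>\<^sub>0 \<noteq> 0"
    show False
    proof (cases "\<exists>\<phi>\<^sub>1\<in>\<Phi>. \<phi>\<^sub>1 \<noteq> \<phi>\<^sub>0 \<and> b \<phi>\<^sub>1 \<noteq> 0")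
      case False
      then have "(\<Sum>\<phi>\<in>\<Phi>. b \<phi> * \<phi> x\<^sub>0) = b \<phi>\<^sub>0 * \<phi>\<^sub>0 x\<^sub>0"
        using fin \<phi>\<^sub>0(1) by (subst sum.remove[of _ \<phi>\<^sub>0]) (auto intro!: sum.neutral)
      with less.prems \<phi>\<^sub>0 b\<^sub>0 show False
        by simp
    next
      case True
      then obtain \<phi>\<^sub>1 where \<phi>\<^sub>1: "\<phi>\<^sub>1 \<in> \<Phi>" "\<phi>\<^sub>1 \<noteq> \<phi>\<^sub>0" "b \<phi>\<^sub>1 \<noteq> 0"
        by blast
      obtain y where y: "y \<in> S" "\<phi>\<^sub>0 y \<noteq> \<phi>\<^sub>1 y"
        using \<phi>\<^sub>1(2) extensionalityI[of \<phi>\<^sub>0 S \<phi>\<^sub>1] ext \<phi>\<^sub>0(1) \<phi>\<^sub>1(1) by blast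
      define b' where "b' \<phi> = b \<phi> * (\<phi> y - \<phi>\<^sub>1 y)" for \<phi>
      have rel': "\<forall>x\<in>S. (\<Sum>\<phi>\<in>\<Phi>. b' \<phi> * \<phi> x) = 0"
      proof
        fix x assume x: "x \<in> S"
        obtain z where z: "z \<in> S" "\<forall>\<phi>\<in>\<Phi>. \<phi> z = \<phi> x * \<phi> y"
          using mult x y(1) by blast
        have "(\<Sum>\<phi>\<in>\<Phi>. b' \<phi> * \<phi> x) = (\<Sum>\<phi>\<in>\<Phi>. b \<phi> * \<phi> z) - \<phi>\<^sub>1 y * (\<Sum>\<phi>\<in>\<Phi>. b \<phi> * \<phi> x)"
          unfolding b'_def sum_distrib_left sum_subtractf[symmetric]
          by (rule sum.cong[OF refl]) (simp add: z(2) algebra_simps)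
        also have "\<dots> = 0"
          using less.prems x z(1) by simp
        finally show "(\<Sum>\<phi>\<in>\<Phi>. b' \<phi> * \<phi> x) = 0" .
      qed
      have "card {\<phi>\<in>\<Phi>. b' \<phi> \<noteq> 0} \<le> card ({\<phi>\<in>\<Phi>. b \<phi> \<noteq> 0} - {\<phi>\<^sub>1})"
        using fin unfolding b'_def by (intro card_mono) auto
      also have "\<dots> < card {\<phi>\<in>\<Phi>. b \<phi> \<noteq> 0}"
        using fin \<phi>\<^sub>1 by (intro card_Diff1_less) auto
      finally have "card {\<phi>\<in>\<Phi>. b' \<phi> \<noteq> 0} < card {\<phi>\<in>\<Phi>. b \<phi> \<noteq> 0}" .
      then have "b' \<phi>\<^sub>0 = 0"
        using less.hyps rel' by blast
      with b\<^sub>0 y(2) show False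
        unfolding b'_def by simp
    qed
  qed
qed

lemma multiplicative_family_separates:
  fixes \<psi> :: "'i \<Rightarrow> 'x \<Rightarrow> nat"
  assumes fin: "finite I"
    and mult: "\<forall>x\<in>S. \<forall>y\<in>S. \<exists>z\<in>S. \<forall>i\<in>I. \<psi> i z = \<psi> i x * \<psi> i y"
    and rel: "\<forall>K\<in>S. (\<Sum>i\<in>I. \<psi> i G * \<psi> i K) = (\<Sum>i\<in>I. \<psi> i H * \<psi> i K)"
    and GH: "G \<in> S" "H \<in> S" and i\<^sub>0: "i\<^sub>0 \<in> I"
  shows "\<psi> i\<^sub>0 G = \<psi> i\<^sub>0 H"
proof -
  define \<psi>' where "\<psi>' i = (\<lambda>x\<in>S. int (\<psi> i x))" for i
  show ?thesis
  proof (cases "\<exists>x\<^sub>0\<in>S. \<psi>' i\<^sub>0 x\<^sub>0 \<noteq> 0")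
    case False
    with GH show ?thesis
      unfolding \<psi>'_def by simp
  next
    case True
    then obtain x\<^sub>0 where x\<^sub>0: "x\<^sub>0 \<in> S" "\<psi>' i\<^sub>0 x\<^sub>0 \<noteq> 0"
      by blast
    text \<open>Indices with the same character on \<open>S\<close> are merged before applying independence.\<close>
    define b where "b \<phi> = (\<Sum>i\<in>{i\<in>I. \<psi>' i = \<phi>}. int (\<psi> i G) - int (\<psi> i H))" for \<phi>
    have rel': "\<forall>x\<in>S. (\<Sum>\<phi>\<in>\<psi>' ` I. b \<phi> * \<phi> x) = 0"
    proof
      fix x assume x: "x \<in> S"
      have "(\<Sum>\<phi>\<in>\<psi>' ` I. b \<phi> * \<phi> x) =
          (\<Sum>\<phi>\<in>\<psi>' ` I. \<Sum>i\<in>{i\<in>I. \<psi>' i = \<phi>}. (int (\<psi> i G) - int (\<psi> i H)) * \<psi>' i x)"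
        unfolding b_def sum_distrib_right by (rule sum.cong[OF refl]) auto
      also have "\<dots> = (\<Sum>i\<in>I. (int (\<psi> i G) - int (\<psi> i H)) * \<psi>' i x)"
        by (rule sum.image_gen[OF fin, symmetric])
      also have "\<dots> = 0"
        using rel x unfolding \<psi>'_def
        by (simp add: left_diff_distrib sum_subtractf flip: of_nat_mult of_nat_sum)
      finally show "(\<Sum>\<phi>\<in>\<psi>' ` I. b \<phi> * \<phi> x) = 0" .
    qed
    have mult': "\<forall>x\<in>S. \<forall>y\<in>S. \<exists>z\<in>S. \<forall>\<phi>\<in>\<psi>' ` I. \<phi> z = \<phi> x * \<phi> y"
    proof (intro ballI)
      fix x y assume xy: "x \<in> S" "y \<in> S"
      then obtain z where "z \<in> S" "\<forall>i\<in>I. \<psi> i z = \<psi> i x * \<psi> i y"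
        using mult by blast
      with xy show "\<exists>z\<in>S. \<forall>\<phi>\<in>\<psi>' ` I. \<phi> z = \<phi> x * \<phi> y"
        unfolding \<psi>'_def by (intro bexI[of _ z]) auto
    qed
    have "\<psi>' ` I \<subseteq> extensional S"
      unfolding \<psi>'_def by auto
    with fin mult' rel' i\<^sub>0 x\<^sub>0 have "b (\<psi>' i\<^sub>0) = 0"
      by (intro multiplicative_functions_independent[where \<Phi> = "\<psi>' ` I" and S = S and x\<^sub>0 = x\<^sub>0]) auto
    moreover have "b (\<psi>' i\<^sub>0) = int (card {i\<in>I. \<psi>' i = \<psi>' i\<^sub>0}) * (int (\<psi> i\<^sub>0 G) - int (\<psi> i\<^sub>0 H))"
    proof -
      have "int (\<psi> i G) - int (\<psi> i H) = int (\<psi> i\<^sub>0 G) - int (\<psi> i\<^sub>0 H)" if eq: "\<psi>' i = \<psi>' i\<^sub>0" for i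
        using fun_cong[OF eq, of G] fun_cong[OF eq, of H] GH unfolding \<psi>'_def by simp
      then have "b (\<psi>' i\<^sub>0) = (\<Sum>i\<in>{i\<in>I. \<psi>' i = \<psi>' i\<^sub>0}. int (\<psi> i\<^sub>0 G) - int (\<psi> i\<^sub>0 H))"
        unfolding b_def by (intro sum.cong[OF refl]) blast
      then show ?thesis
        by simp
    qed
    moreover have "card {i\<in>I. \<psi>' i = \<psi>' i\<^sub>0} \<noteq> 0"
      using fin i\<^sub>0 by auto
    ultimately show ?thesis
      by simp
  qed
qed

lemma hom_equiv_gadget:
  assumes simp\<F>: "\<forall>F\<in>\<F>. simple_graph F"
    and compl: "\<forall>G H. simple_graph G \<longrightarrow> simple_graph H \<longrightarrow> hom_equiv \<F> G H \<longrightarrow>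
      hom_equiv \<F> (complement G) (complement H)"
    and F: "finite (verts F)" and G: "simple_graph G" and H: "simple_graph H"
    and GH: "hom_equiv \<F> G H"
  shows "hom_equiv \<F> (gadget F A\<^sub>0 G) (gadget F A\<^sub>0 H)"
proof -
  let ?L = "loop_graph F A\<^sub>0"
  have L: "finite (verts ?L)"
    using F unfolding loop_graph_def by simp
  have "hom_equiv \<F> (complement G) (complement H)"
    using compl G H GH by blast
  then have "hom_equiv \<F> (tensor_graph (complement G) ?L) (tensor_graph (complement H) ?L)"
    using G H L simp\<F>
    by (intro hom_equiv_tensor_graph) (simp_all add: simple_graph_finite_verts)
  moreover have "simple_graph (tensor_graph (complement G) ?L)" "simple_graph (tensor_graph (complement H) ?L)"
    using G H L by (simp_all add: simple_graph_tensor_graph simple_graph_complement)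
  ultimately show ?thesis
    unfolding gadget_def using compl by blast
qed

lemma hom_count_gadget_tensor_graph:
  assumes F: "simple_graph F" and A\<^sub>0: "A\<^sub>0 \<subseteq> edges F" and X: "simple_graph X" and K: "simple_graph K"
  shows "hom_count F (gadget F A\<^sub>0 (tensor_graph X K)) =
    (\<Sum>(h, T)\<in>(SIGMA h:verts F \<rightarrow>\<^sub>E verts F. Pow (edges_mapped_into F A\<^sub>0 h)).
       collapse_count F T (edges_mapped_into F (edges (loop_graph F A\<^sub>0)) h) X *
       collapse_count F T (edges_mapped_into F (edges (loop_graph F A\<^sub>0)) h) K)"
proof -
  let ?N = "edges_mapped_into F A\<^sub>0" and ?A = "edges_mapped_into F (edges (loop_graph F A\<^sub>0))"
  have XK: "simple_graph (tensor_graph X K)"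
    using X K by (simp add: simple_graph_tensor_graph simple_graph_finite_verts)
  have "hom_count F (gadget F A\<^sub>0 (tensor_graph X K)) =
      (\<Sum>h\<in>verts F \<rightarrow>\<^sub>E verts F. \<Sum>T\<in>Pow (?N h). collapse_count F T (?A h) X * collapse_count F T (?A h) K)"
    unfolding hom_count_gadget[OF F A\<^sub>0 XK]
  proof (intro sum.cong[OF refl] collapse_count_tensor_graph[OF F])
    fix h T assume "T \<in> Pow (?N h)"
    then show "T \<subseteq> ?A h"
      unfolding edges_mapped_into_def loop_graph_def by auto
    show "?A h \<subseteq> edges F"
      unfolding edges_mapped_into_def by auto
  qed (use X K in \<open>simp_all add: simple_graph_finite_verts\<close>)
  also have "\<dots> = (\<Sum>(h, T)\<in>(SIGMA h:verts F \<rightarrow>\<^sub>E verts F. Pow (?N h)).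
      collapse_count F T (?A h) X * collapse_count F T (?A h) K)"
    using simple_graph_finite_verts[OF F] simple_graph_finite_edges[OF F]
    by (intro sum.Sigma) (auto simp: finite_PiE edges_mapped_into_def)
  finally show ?thesis .
qed

lemma edges_mapped_into_id:
  assumes F: "simple_graph F" and A\<^sub>0: "A\<^sub>0 \<subseteq> edges F"
  shows "edges_mapped_into F A\<^sub>0 (\<lambda>x\<in>verts F. x) = A\<^sub>0"
    and "edges_mapped_into F (edges (loop_graph F A\<^sub>0)) (\<lambda>x\<in>verts F. x) = A\<^sub>0"
proof -
  have id_edge: "(\<lambda>x\<in>verts F. x) ` e = e" if e: "e \<in> edges F" for e
  proof -
    obtain u v where "u \<in> verts F" "v \<in> verts F" "e = {u, v}"
      using simple_graph_edgeE[OF F e] by metis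
    then show ?thesis by simp
  qed
  then show "edges_mapped_into F A\<^sub>0 (\<lambda>x\<in>verts F. x) = A\<^sub>0"
    "edges_mapped_into F (edges (loop_graph F A\<^sub>0)) (\<lambda>x\<in>verts F. x) = A\<^sub>0"
    using A\<^sub>0 simple_graph_singleton_notin_edges[OF F]
    unfolding edges_mapped_into_def loop_graph_def by auto
qed

lemma gadget_pairings_eq_if_complement_invariant:
  fixes K :: "nat graph"
  assumes simp\<F>: "\<forall>F\<in>\<F>. simple_graph F"
    and compl: "\<forall>G H. simple_graph G \<longrightarrow> simple_graph H \<longrightarrow> hom_equiv \<F> G H \<longrightarrow>
      hom_equiv \<F> (complement G) (complement H)"
    and F: "F \<in> \<F>" and A\<^sub>0: "A\<^sub>0 \<subseteq> edges F"
    and G: "simple_graph G" and H: "simple_graph H" and GH: "hom_equiv \<F> G H" and K: "simple_graph K"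
  shows "(\<Sum>(h, T)\<in>(SIGMA h:verts F \<rightarrow>\<^sub>E verts F. Pow (edges_mapped_into F A\<^sub>0 h)).
       collapse_count F T (edges_mapped_into F (edges (loop_graph F A\<^sub>0)) h) G *
       collapse_count F T (edges_mapped_into F (edges (loop_graph F A\<^sub>0)) h) K) =
    (\<Sum>(h, T)\<in>(SIGMA h:verts F \<rightarrow>\<^sub>E verts F. Pow (edges_mapped_into F A\<^sub>0 h)).
       collapse_count F T (edges_mapped_into F (edges (loop_graph F A\<^sub>0)) h) H *
       collapse_count F T (edges_mapped_into F (edges (loop_graph F A\<^sub>0)) h) K)"
proof -
  have "simple_graph F"
    using simp\<F> F by blast
  have "hom_equiv \<F> (gadget F A\<^sub>0 (tensor_graph G K)) (gadget F A\<^sub>0 (tensor_graph H K))"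
    using simp\<F> compl simple_graph_finite_verts[OF \<open>simple_graph F\<close>] G H K GH
    by (intro hom_equiv_gadget hom_equiv_tensor_graph)
      (simp_all add: simple_graph_tensor_graph simple_graph_finite_verts)
  then have "hom_count F (gadget F A\<^sub>0 (tensor_graph G K)) = hom_count F (gadget F A\<^sub>0 (tensor_graph H K))"
    using F unfolding hom_equiv_def by blast
  then show ?thesis
    unfolding hom_count_gadget_tensor_graph[OF \<open>simple_graph F\<close> A\<^sub>0 G K]
      hom_count_gadget_tensor_graph[OF \<open>simple_graph F\<close> A\<^sub>0 H K] .
qed

text \<open>The hom counts into the gadgets over \<open>G \<times> K\<close> are bilinear forms in the collapse-count vectors
  of \<open>G\<close> and \<open>K\<close>; as the collapse counts are multiplicative in \<open>K\<close>, this determines the vector of \<open>G\<close>.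
  The identity map on \<open>V(F\<^sub>0)\<close> then picks out \<open>collapse_count F\<^sub>0 T\<^sub>0 A\<^sub>0\<close>.\<close>
lemma collapse_count_eq_if_complement_invariant:
  assumes simp\<F>: "\<forall>F\<in>\<F>. simple_graph F"
    and compl: "\<forall>G H. simple_graph G \<longrightarrow> simple_graph H \<longrightarrow> hom_equiv \<F> G H \<longrightarrow>
      hom_equiv \<F> (complement G) (complement H)"
    and F\<^sub>0: "F\<^sub>0 \<in> \<F>" and T\<^sub>0: "T\<^sub>0 \<subseteq> A\<^sub>0" and A\<^sub>0: "A\<^sub>0 \<subseteq> edges F\<^sub>0"
    and G: "simple_graph G" and H: "simple_graph H" and GH: "hom_equiv \<F> G H"
  shows "collapse_count F\<^sub>0 T\<^sub>0 A\<^sub>0 G = collapse_count F\<^sub>0 T\<^sub>0 A\<^sub>0 H"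
proof -
  have F: "simple_graph F\<^sub>0"
    using simp\<F> F\<^sub>0 by blast
  let ?N = "edges_mapped_into F\<^sub>0 A\<^sub>0" and ?A = "edges_mapped_into F\<^sub>0 (edges (loop_graph F\<^sub>0 A\<^sub>0))"
  let ?S = "Collect simple_graph"
  define I where "I = (SIGMA h:verts F\<^sub>0 \<rightarrow>\<^sub>E verts F\<^sub>0. Pow (?N h))"
  define \<psi> :: "(nat \<Rightarrow> nat) \<times> nat set set \<Rightarrow> nat graph \<Rightarrow> nat"
    where "\<psi> = (\<lambda>(h, T). collapse_count F\<^sub>0 T (?A h))"
  have "finite I"
    using simple_graph_finite_verts[OF F] simple_graph_finite_edges[OF F]
    unfolding I_def by (auto simp: finite_PiE edges_mapped_into_def intro!: finite_SigmaI)
  moreover have "\<forall>X\<in>?S. \<forall>K\<in>?S. \<exists>Z\<in>?S. \<forall>i\<in>I. \<psi> i Z = \<psi> i X * \<psi> i K"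
  proof (intro ballI)
    fix X K :: "nat graph" assume "X \<in> ?S" "K \<in> ?S"
    then have X: "simple_graph X" and K: "simple_graph K"
      by simp_all
    have sub: "T \<subseteq> ?A h" "?A h \<subseteq> edges F\<^sub>0" if "(h, T) \<in> I" for h T
      using that unfolding I_def edges_mapped_into_def loop_graph_def by auto
    have "\<psi> i (tensor_graph X K) = \<psi> i X * \<psi> i K" if "i \<in> I" for i
      using sub[of "fst i" "snd i"] that X K unfolding \<psi>_def
      by (simp add: split_beta collapse_count_tensor_graph[OF F] simple_graph_finite_verts)
    moreover have "tensor_graph X K \<in> ?S"
      using X K by (simp add: simple_graph_tensor_graph simple_graph_finite_verts)
    ultimately show "\<exists>Z\<in>?S. \<forall>i\<in>I. \<psi> i Z = \<psi> i X * \<psi> i K"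
      by blast
  qed
  moreover have "\<forall>K\<in>?S. (\<Sum>i\<in>I. \<psi> i G * \<psi> i K) = (\<Sum>i\<in>I. \<psi> i H * \<psi> i K)"
    using gadget_pairings_eq_if_complement_invariant[OF simp\<F> compl F\<^sub>0 A\<^sub>0 G H GH]
    unfolding I_def \<psi>_def by (simp add: split_def)
  moreover have "(\<lambda>x\<in>verts F\<^sub>0. x, T\<^sub>0) \<in> I"
    using T\<^sub>0 edges_mapped_into_id[OF F A\<^sub>0] unfolding I_def by simp
  ultimately have "\<psi> (\<lambda>x\<in>verts F\<^sub>0. x, T\<^sub>0) G = \<psi> (\<lambda>x\<in>verts F\<^sub>0. x, T\<^sub>0) H"
    using G H by (intro multiplicative_family_separates[where S = ?S]) auto
  then show ?thesis
    using edges_mapped_into_id[OF F A\<^sub>0] by (simp add: \<psi>_def)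
qed

section \<open>Contractions and minors\<close>

definition block_of :: "'a set set \<Rightarrow> 'a \<Rightarrow> 'a set" where
  "block_of \<P> v = (THE P. P \<in> \<P> \<and> v \<in> P)"

lemma block_of_eq:
  assumes "is_partition \<P> V" "P \<in> \<P>" "v \<in> P"
  shows "block_of \<P> v = P"
  unfolding block_of_def
proof (rule the_equality)
  fix Q assume "Q \<in> \<P> \<and> v \<in> Q"
  with assms show "Q = P"
    unfolding is_partition_def by blast
qed (use assms in simp)

lemma block_of_mem:
  assumes "is_partition \<P> V" "v \<in> V"
  shows "block_of \<P> v \<in> \<P>" "v \<in> block_of \<P> v"
proof -
  obtain P where "P \<in> \<P>" "v \<in> P"
    using assms unfolding is_partition_def by blast
  with block_of_eq[OF assms(1)] show "block_of \<P> v \<in> \<P>" "v \<in> block_of \<P> v"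
    by simp_all
qed

lemma constant_on_blocks_iff:
  assumes part: "is_partition \<P> V" and ne: "{} \<notin> T"
    and in_block: "\<forall>e\<in>T. \<exists>P\<in>\<P>. e \<subseteq> P"
    and conn: "\<forall>P\<in>\<P>. \<forall>u\<in>P. \<forall>v\<in>P. (\<lambda>x y. {x, y} \<in> T)\<^sup>*\<^sup>* u v"
  shows "(\<forall>e\<in>T. \<exists>a. g ` e = {a}) \<longleftrightarrow> (\<forall>P\<in>\<P>. \<exists>a. g ` P = {a})"
proof
  assume const: "\<forall>e\<in>T. \<exists>a. g ` e = {a}"
  show "\<forall>P\<in>\<P>. \<exists>a. g ` P = {a}"
  proof
    fix P assume P: "P \<in> \<P>"
    with part have "P \<noteq> {}"
      unfolding is_partition_def by blast
    then obtain v where v: "v \<in> P"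
      by blast
    have "g w = g v" if w: "w \<in> P" for w
    proof -
      have "(\<lambda>x y. {x, y} \<in> T)\<^sup>*\<^sup>* v w"
        using conn P v w by blast
      then show ?thesis
      proof (induction rule: rtranclp_induct)
        case (step y z)
        obtain a where "g ` {y, z} = {a}"
          using const step.hyps(2) by blast
        with step.IH show ?case
          by auto
      qed simp
    qed
    with v have "g ` P = {g v}"
      by blast
    then show "\<exists>a. g ` P = {a}" ..
  qed
next
  assume const: "\<forall>P\<in>\<P>. \<exists>a. g ` P = {a}"
  show "\<forall>e\<in>T. \<exists>a. g ` e = {a}"
  proof
    fix e assume e: "e \<in> T"
    then obtain P where "P \<in> \<P>" "e \<subseteq> P"
      using in_block by blast
    moreover from this(1) obtain a where "g ` P = {a}"
      using const by blast
    moreover have "e \<noteq> {}"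
      using e ne by blast
    ultimately have "g ` e = {a}"
      using image_mono[of e P g] by (simp add: subset_singleton_iff)
    then show "\<exists>a. g ` e = {a}" ..
  qed
qed

text \<open>Unlike \<^const>\<open>quotient_graph\<close>, this keeps a loop \<open>{P}\<close> for an edge of \<open>B\<close> inside the
  block \<open>P\<close>.\<close>
definition contraction :: "'a set set \<Rightarrow> 'a set set \<Rightarrow> 'a set graph" where
  "contraction \<P> B = (\<P>, (\<lambda>e. block_of \<P> ` e) ` B)"

lemma verts_contraction [simp]: "verts (contraction \<P> B) = \<P>"
  and edges_contraction [simp]: "edges (contraction \<P> B) = (\<lambda>e. block_of \<P> ` e) ` B"
  unfolding contraction_def by simp_all

context
  fixes F :: "'a graph" and \<P> T A :: "'a set set"
  assumes F: "simple_graph F" and part: "is_partition \<P> (verts F)"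
    and T: "T \<subseteq> edges F" "\<forall>e\<in>T. \<exists>P\<in>\<P>. e \<subseteq> P"
      "\<forall>P\<in>\<P>. \<forall>u\<in>P. \<forall>v\<in>P. (\<lambda>x y. {x, y} \<in> T)\<^sup>*\<^sup>* u v"
    and A: "A \<subseteq> edges F"
begin

lemma some_in_block: "P \<in> \<P> \<Longrightarrow> (SOME v. v \<in> P) \<in> P"
  using part unfolding is_partition_def by (auto simp: some_in_eq)

lemma block_subset_verts: "P \<in> \<P> \<Longrightarrow> P \<subseteq> verts F"
  using part unfolding is_partition_def by blast

lemma collapse_homs_iff_constant_on_blocks:
  "(\<forall>e\<in>T. \<exists>a. g ` e = {a}) \<longleftrightarrow> (\<forall>P\<in>\<P>. \<exists>a. g ` P = {a})"
proof (rule constant_on_blocks_iff[OF part _ T(2,3)])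
  show "{} \<notin> T"
    using T(1) simple_graph_edgeE[OF F] by blast
qed

lemma collapse_homs_constant_on_block:
  assumes g: "g \<in> collapse_homs F T A X" and P: "P \<in> \<P>" "v \<in> P"
  shows "g v = g (SOME w. w \<in> P)"
proof -
  have "\<forall>e\<in>T. \<exists>a. g ` e = {a}"
    using g unfolding collapse_homs_def by blast
  then have "\<forall>P\<in>\<P>. \<exists>a. g ` P = {a}"
    by (rule collapse_homs_iff_constant_on_blocks[THEN iffD1])
  then obtain a where "g ` P = {a}"
    using P(1) by blast
  then have "g w = a" if "w \<in> P" for w
    using that by blast
  with P(2) some_in_block[OF P(1)] show ?thesis
    by simp
qed

lemma edge_image_blocks:
  assumes "e \<in> A"
  obtains u v where "u \<in> verts F" "v \<in> verts F" "e = {u, v}"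
    "block_of \<P> ` e = {block_of \<P> u, block_of \<P> v}"
proof -
  obtain u v where "u \<in> verts F" "v \<in> verts F" "e = {u, v}"
    using simple_graph_edgeE[OF F] assms A by blast
  with that show thesis
    by simp
qed

lemma lift_in_collapse_homs:
  assumes \<phi>: "\<phi> \<in> homs (contraction \<P> (A - T)) X"
  shows "(\<lambda>v\<in>verts F. \<phi> (block_of \<P> v)) \<in> collapse_homs F T A X" (is "?g \<in> _")
proof -
  have "\<phi> \<in> \<P> \<rightarrow>\<^sub>E verts X"
    using \<phi> unfolding homs_def by simp
  then have "?g \<in> verts F \<rightarrow>\<^sub>E verts X"
    using block_of_mem(1)[OF part] by (auto simp: PiE_iff)
  moreover have "?g ` P = {\<phi> P}" if P: "P \<in> \<P>" for P
  proof -
    have "?g v = \<phi> P" if v: "v \<in> P" for v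
      using block_subset_verts[OF P] block_of_eq[OF part P v] v by auto
    moreover have "P \<noteq> {}"
      using some_in_block[OF P] by blast
    ultimately show ?thesis
      by auto
  qed
  then have "\<forall>P\<in>\<P>. \<exists>a. ?g ` P = {a}"
    by blast
  then have "\<forall>e\<in>T. \<exists>a. ?g ` e = {a}"
    by (rule collapse_homs_iff_constant_on_blocks[THEN iffD2])
  moreover have "?g ` e \<in> edges X" if e: "e \<in> A - T" for e
  proof -
    obtain u v where uv: "u \<in> verts F" "v \<in> verts F" "e = {u, v}"
      and image: "block_of \<P> ` e = {block_of \<P> u, block_of \<P> v}"
      using e by (auto elim: edge_image_blocks)
    have "{block_of \<P> u, block_of \<P> v} \<in> edges (contraction \<P> (A - T))"
      using e image by (metis edges_contraction image_eqI)
    then have "{\<phi> (block_of \<P> u), \<phi> (block_of \<P> v)} \<in> edges X"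
      using \<phi> block_of_mem(1)[OF part] uv(1,2) unfolding homs_def by simp
    with uv show ?thesis
      by simp
  qed
  ultimately show ?thesis
    unfolding collapse_homs_def by blast
qed

lemma pick_in_homs_contraction:
  assumes g: "g \<in> collapse_homs F T A X"
  shows "(\<lambda>P\<in>\<P>. g (SOME v. v \<in> P)) \<in> homs (contraction \<P> (A - T)) X" (is "?\<phi> \<in> _")
proof -
  have "g \<in> verts F \<rightarrow>\<^sub>E verts X"
    using g unfolding collapse_homs_def by blast
  then have "?\<phi> \<in> \<P> \<rightarrow>\<^sub>E verts X"
    using some_in_block block_subset_verts by (auto simp: PiE_iff)
  moreover have "{?\<phi> P, ?\<phi> Q} \<in> edges X" if PQ: "{P, Q} \<in> edges (contraction \<P> (A - T))" for P Q
  proof -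
    obtain e where e: "e \<in> A - T" "{P, Q} = block_of \<P> ` e"
      using PQ by auto
    obtain u v where uv: "u \<in> verts F" "v \<in> verts F" "e = {u, v}"
      and image: "block_of \<P> ` e = {block_of \<P> u, block_of \<P> v}"
      using e(1) by (auto elim: edge_image_blocks)
    have pick: "?\<phi> (block_of \<P> w) = g w" if "w \<in> verts F" for w
      using collapse_homs_constant_on_block[OF g block_of_mem[OF part that]] block_of_mem(1)[OF part that]
      by simp
    have "{?\<phi> P, ?\<phi> Q} = {?\<phi> (block_of \<P> u), ?\<phi> (block_of \<P> v)}"
      using e(2) image by (auto simp: doubleton_eq_iff)
    also have "\<dots> = g ` e"
      unfolding pick[OF uv(1)] pick[OF uv(2)] uv(3) by simp
    finally have "{?\<phi> P, ?\<phi> Q} = g ` e" .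
    with g e(1) show ?thesis
      unfolding collapse_homs_def by auto
  qed
  ultimately show ?thesis
    unfolding homs_def verts_contraction by blast
qed

lemma collapse_count_eq_hom_count_contraction:
  "collapse_count F T A X = hom_count (contraction \<P> (A - T)) X"
proof -
  have "bij_betw (\<lambda>\<phi>. \<lambda>v\<in>verts F. \<phi> (block_of \<P> v)) (homs (contraction \<P> (A - T)) X)
      (collapse_homs F T A X)"
  proof (rule bij_betw_byWitness[where f' = "\<lambda>g. \<lambda>P\<in>\<P>. g (SOME v. v \<in> P)"])
    show "\<forall>\<phi>\<in>homs (contraction \<P> (A - T)) X.
        (\<lambda>P\<in>\<P>. (\<lambda>v\<in>verts F. \<phi> (block_of \<P> v)) (SOME v. v \<in> P)) = \<phi>"
    proof
      fix \<phi> assume "\<phi> \<in> homs (contraction \<P> (A - T)) X"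
      then have "\<phi> \<in> extensional \<P>"
        unfolding homs_def by (simp add: PiE_iff)
      moreover have "(\<lambda>v\<in>verts F. \<phi> (block_of \<P> v)) (SOME v. v \<in> P) = \<phi> P" if "P \<in> \<P>" for P
        using some_in_block[OF that] block_subset_verts[OF that] block_of_eq[OF part that] by auto
      ultimately show "(\<lambda>P\<in>\<P>. (\<lambda>v\<in>verts F. \<phi> (block_of \<P> v)) (SOME v. v \<in> P)) = \<phi>"
        by (auto simp: fun_eq_iff extensional_def)
    qed
    show "\<forall>g\<in>collapse_homs F T A X. (\<lambda>v\<in>verts F. (\<lambda>P\<in>\<P>. g (SOME v. v \<in> P)) (block_of \<P> v)) = g"
    proof
      fix g assume g: "g \<in> collapse_homs F T A X"
      then have "g \<in> extensional (verts F)"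
        unfolding collapse_homs_def by (simp add: PiE_iff)
      moreover have "(\<lambda>P\<in>\<P>. g (SOME v. v \<in> P)) (block_of \<P> v) = g v" if "v \<in> verts F" for v
        using collapse_homs_constant_on_block[OF g block_of_mem[OF part that]] block_of_mem(1)[OF part that]
        by simp
      ultimately show "(\<lambda>v\<in>verts F. (\<lambda>P\<in>\<P>. g (SOME v. v \<in> P)) (block_of \<P> v)) = g"
        by (auto simp: fun_eq_iff extensional_def)
    qed
  qed (use lift_in_collapse_homs pick_in_homs_contraction in blast)+
  then show ?thesis
    unfolding collapse_count_def hom_count_def by (simp add: bij_betw_same_card)
qed

end

lemma hom_count_eq_0_if_loop:
  assumes "{v} \<in> edges S" "v \<in> verts S" "simple_graph X"
  shows "hom_count S X = 0"
proof -
  have "homs S X = {}"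
    using assms simple_graph_singleton_notin_edges[OF assms(3)] unfolding homs_def by fastforce
  then show ?thesis
    unfolding hom_count_def by simp
qed

lemma subgraph_contraction_quotient_graph:
  assumes F: "simple_graph F" and part: "is_partition \<P> (verts F)" and B: "B \<subseteq> edges F"
    and no_loop: "\<forall>e\<in>B. \<forall>P. block_of \<P> ` e \<noteq> {P}"
  shows "subgraph (contraction \<P> B) (quotient_graph F \<P>)"
proof -
  have edge: "\<exists>u v. block_of \<P> ` e = {block_of \<P> u, block_of \<P> v} \<and> block_of \<P> u \<noteq> block_of \<P> v \<and>
      block_of \<P> u \<in> \<P> \<and> block_of \<P> v \<in> \<P> \<and> u \<in> block_of \<P> u \<and> v \<in> block_of \<P> v \<and> {u, v} \<in> edges F"
    if e: "e \<in> B" for e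
  proof -
    obtain u v where uv: "u \<in> verts F" "v \<in> verts F" "e = {u, v}"
      using simple_graph_edgeE[OF F] e B by blast
    moreover have "block_of \<P> u \<noteq> block_of \<P> v"
      using no_loop e uv(3) by force
    moreover have "{u, v} \<in> edges F"
      using e uv(3) B by blast
    ultimately show ?thesis
      using block_of_mem[OF part uv(1)] block_of_mem[OF part uv(2)] by auto
  qed
  have "finite \<P>"
    using part simple_graph_finite_verts[OF F] unfolding is_partition_def by (metis finite_UnionD)
  moreover have "\<exists>P Q. P \<noteq> Q \<and> P \<in> \<P> \<and> Q \<in> \<P> \<and> x = {P, Q}"
    and "x \<in> edges (quotient_graph F \<P>)" if x: "x \<in> edges (contraction \<P> B)" for x
  proof -
    obtain e where e: "e \<in> B" "x = block_of \<P> ` e"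
      using x by auto
    then obtain u v where "x = {block_of \<P> u, block_of \<P> v}" "block_of \<P> u \<noteq> block_of \<P> v"
      "block_of \<P> u \<in> \<P>" "block_of \<P> v \<in> \<P>" "u \<in> block_of \<P> u" "v \<in> block_of \<P> v" "{u, v} \<in> edges F"
      using edge[OF e(1)] by auto
    then show "\<exists>P Q. P \<noteq> Q \<and> P \<in> \<P> \<and> Q \<in> \<P> \<and> x = {P, Q}"
      and "x \<in> edges (quotient_graph F \<P>)"
      unfolding quotient_graph_def by auto
  qed
  ultimately show ?thesis
    unfolding subgraph_def simple_graph_def quotient_graph_def by auto
qed

definition component :: "'a set set \<Rightarrow> 'a \<Rightarrow> 'a set" where
  "component T v = {w. (\<lambda>x y. {x, y} \<in> T)\<^sup>*\<^sup>* v w}"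

lemma equivp_edge_reachability: "equivp (\<lambda>x y. {x, y} \<in> T)\<^sup>*\<^sup>*"
  by (rule equivp_rtranclp) (simp add: symp_def insert_commute)

lemma mem_component_iff: "w \<in> component T v \<longleftrightarrow> (\<lambda>x y. {x, y} \<in> T)\<^sup>*\<^sup>* v w"
  unfolding component_def by simp

lemma component_eq_iff: "component T u = component T w \<longleftrightarrow> (\<lambda>x y. {x, y} \<in> T)\<^sup>*\<^sup>* u w"
proof
  assume "component T u = component T w"
  then show "(\<lambda>x y. {x, y} \<in> T)\<^sup>*\<^sup>* u w"
    by (metis mem_component_iff rtranclp.rtrancl_refl)
next
  assume "(\<lambda>x y. {x, y} \<in> T)\<^sup>*\<^sup>* u w"
  then have "(\<lambda>x y. {x, y} \<in> T)\<^sup>*\<^sup>* u = (\<lambda>x y. {x, y} \<in> T)\<^sup>*\<^sup>* w"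
    using equivp_edge_reachability[of T] by (simp only: equivp_def)
  then show "component T u = component T w"
    unfolding component_def by simp
qed

lemma reachable_in_component:
  "u \<in> component T v \<Longrightarrow> w \<in> component T v \<Longrightarrow> (\<lambda>x y. {x, y} \<in> T)\<^sup>*\<^sup>* u w"
  by (metis component_eq_iff mem_component_iff)

context
  fixes F :: "'a graph" and T :: "'a set set"
  assumes F: "simple_graph F" and T: "T \<subseteq> edges F"
begin

lemma component_subset_verts:
  assumes "v \<in> verts F"
  shows "component T v \<subseteq> verts F"
proof
  fix w assume "w \<in> component T v"
  then have "(\<lambda>x y. {x, y} \<in> T)\<^sup>*\<^sup>* v w"
    by (simp add: mem_component_iff)
  then show "w \<in> verts F"
    by (induction rule: rtranclp_induct) (use assms T simple_graph_edgeD[OF F] in blast)+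
qed

lemma is_partition_components: "is_partition (component T ` verts F) (verts F)"
  unfolding is_partition_def
proof (intro conjI ballI impI)
  show "\<Union> (component T ` verts F) = verts F"
    using component_subset_verts by (auto simp: mem_component_iff)
  have "v \<in> component T v" for v
    by (simp add: mem_component_iff)
  then show "{} \<notin> component T ` verts F"
    by blast
  fix P Q assume "P \<in> component T ` verts F" "Q \<in> component T ` verts F" "P \<noteq> Q"
  then obtain u w where P: "P = component T u" and Q: "Q = component T w"
    by blast
  have "P = Q" if "x \<in> P" "x \<in> Q" for x
    using that unfolding P Q mem_component_iff by (metis component_eq_iff)
  with \<open>P \<noteq> Q\<close> show "P \<inter> Q = {}"
    by blast
qed

lemma edge_subset_component:
  assumes "e \<in> T"
  shows "\<exists>P\<in>component T ` verts F. e \<subseteq> P"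
proof -
  obtain u v where "u \<in> verts F" "e = {u, v}"
    using simple_graph_edgeE[OF F] T assms by blast
  with assms show ?thesis
    by (auto simp: mem_component_iff)
qed

lemma induced_connected_component:
  assumes v: "v \<in> verts F"
  shows "induced_connected F (component T v)"
  unfolding induced_connected_def
proof (intro conjI ballI)
  let ?P = "component T v"
  show "?P \<noteq> {}" "?P \<subseteq> verts F"
    using component_subset_verts[OF v] by (auto simp: mem_component_iff)
  have path: "(\<lambda>x y. x \<in> ?P \<and> y \<in> ?P \<and> {x, y} \<in> edges F)\<^sup>*\<^sup>* u w"
    if "(\<lambda>x y. {x, y} \<in> T)\<^sup>*\<^sup>* u w" "u \<in> ?P" for u w
    using that
  proof (induction rule: rtranclp_induct)
    case (step y z)
    then have "y \<in> ?P" "z \<in> ?P"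
      unfolding mem_component_iff by (auto intro: rtranclp_trans)
    with step show ?case
      using T by (auto intro: rtranclp.rtrancl_into_rtrancl)
  qed simp
  fix u w assume "u \<in> ?P" "w \<in> ?P"
  then show "(\<lambda>x y. x \<in> ?P \<and> y \<in> ?P \<and> {x, y} \<in> edges F)\<^sup>*\<^sup>* u w"
    using path[OF reachable_in_component] by simp
qed

end

lemma collapse_count_zero_or_minor:
  fixes F :: "'a graph"
  assumes F: "simple_graph F" and TA: "T \<subseteq> A" "A \<subseteq> edges F"
  shows "(\<forall>X :: nat graph. simple_graph X \<longrightarrow> collapse_count F T A X = 0) \<or>
    (\<exists>M :: nat graph. simple_graph M \<and> is_minor M F \<and> (\<forall>X :: nat graph. collapse_count F T A X = hom_count M X))"
proof -
  let ?\<P> = "component T ` verts F"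
  have T: "T \<subseteq> edges F"
    using TA by blast
  note part = is_partition_components[OF F T]
  have count: "collapse_count F T A X = hom_count (contraction ?\<P> (A - T)) X" for X :: "nat graph"
  proof (rule collapse_count_eq_hom_count_contraction[OF F part T _ _ TA(2)])
    show "\<forall>e\<in>T. \<exists>P\<in>?\<P>. e \<subseteq> P"
      using edge_subset_component[OF F T] by blast
    show "\<forall>P\<in>?\<P>. \<forall>u\<in>P. \<forall>v\<in>P. (\<lambda>x y. {x, y} \<in> T)\<^sup>*\<^sup>* u v"
    proof (intro ballI)
      fix P u v assume "P \<in> ?\<P>" "u \<in> P" "v \<in> P"
      then obtain x where "u \<in> component T x" "v \<in> component T x"
        by blast
      then show "(\<lambda>x y. {x, y} \<in> T)\<^sup>*\<^sup>* u v"
        by (rule reachable_in_component)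
    qed
  qed
  show ?thesis
  proof (cases "\<exists>e\<in>A - T. \<exists>P. block_of ?\<P> ` e = {P}")
    case True
    then obtain e P where e: "e \<in> A - T" "block_of ?\<P> ` e = {P}"
      by blast
    then obtain u where "u \<in> verts F" "u \<in> e"
      using simple_graph_edgeE[OF F] TA by (metis DiffD1 insertI1 subsetD)
    moreover from this(2) e(2) have "P = block_of ?\<P> u"
      by blast
    ultimately have "P \<in> verts (contraction ?\<P> (A - T))" "{P} \<in> edges (contraction ?\<P> (A - T))"
      using e block_of_mem(1)[OF part] by (auto intro: image_eqI[of _ _ e])
    with count have "\<forall>X :: nat graph. simple_graph X \<longrightarrow> collapse_count F T A X = 0"
      using hom_count_eq_0_if_loop by metis
    then show ?thesis ..
  next
    case False
    then have "subgraph (contraction ?\<P> (A - T)) (quotient_graph F ?\<P>)"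
      using TA by (intro subgraph_contraction_quotient_graph[OF F part]) auto
    moreover from this obtain M :: "nat graph" where M: "simple_graph M" "graph_iso M (contraction ?\<P> (A - T))"
      using ex_nat_graph_iso unfolding subgraph_def by blast
    ultimately have "is_minor M F"
      unfolding is_minor_def using part induced_connected_component[OF F T] by blast
    with M count have "\<exists>M :: nat graph. simple_graph M \<and> is_minor M F \<and> (\<forall>X :: nat graph. collapse_count F T A X = hom_count M X)"
      using hom_count_graph_iso by metis
    then show ?thesis ..
  qed
qed

section \<open>Minor-closed classes and complements\<close>

lemma reachable_in_connected_block:
  assumes "induced_connected F P" "P \<in> \<P>" "u \<in> P" "v \<in> P"
  shows "(\<lambda>x y. {x, y} \<in> {e \<in> edges F. \<exists>P\<in>\<P>. e \<subseteq> P})\<^sup>*\<^sup>* u v"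
proof -
  have path: "(\<lambda>x y. x \<in> P \<and> y \<in> P \<and> {x, y} \<in> edges F)\<^sup>*\<^sup>* u v"
    using assms unfolding induced_connected_def by blast
  have "(\<lambda>x y. x \<in> P \<and> y \<in> P \<and> {x, y} \<in> edges F) \<le> (\<lambda>x y. {x, y} \<in> {e \<in> edges F. \<exists>P\<in>\<P>. e \<subseteq> P})"
  proof (intro predicate2I)
    fix x y assume "x \<in> P \<and> y \<in> P \<and> {x, y} \<in> edges F"
    then have "{x, y} \<in> edges F" "{x, y} \<subseteq> P"
      by simp_all
    with assms(2) show "{x, y} \<in> {e \<in> edges F. \<exists>P\<in>\<P>. e \<subseteq> P}"
      by blast
  qed
  from predicate2D[OF rtranclp_mono[OF this] path] show ?thesis .
qed

lemma block_image_of_edge_in_block: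
  assumes F: "simple_graph F" and part: "is_partition \<P> (verts F)"
    and e: "e \<in> edges F" "P \<in> \<P>" "e \<subseteq> P"
  shows "block_of \<P> ` e = {P}"
proof -
  obtain u v where "e = {u, v}"
    using simple_graph_edgeE[OF F e(1)] by metis
  with e block_of_eq[OF part e(2)] show ?thesis
    by simp
qed

lemma block_image_of_preimage_edges:
  assumes part: "is_partition \<P> (verts F)" and S: "edges S \<subseteq> edges (quotient_graph F \<P>)"
  shows "(\<lambda>e. block_of \<P> ` e) ` {e \<in> edges F. block_of \<P> ` e \<in> edges S} = edges S"
proof (intro equalityI subsetI)
  fix x assume "x \<in> edges S"
  with S have "x \<in> edges (quotient_graph F \<P>)"
    by blast
  then obtain P Q p q where "x = {P, Q}" "P \<in> \<P>" "Q \<in> \<P>" "p \<in> P" "q \<in> Q" "{p, q} \<in> edges F"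
    unfolding quotient_graph_def by auto
  moreover from this have "block_of \<P> ` {p, q} = {P, Q}"
    using block_of_eq[OF part] by simp
  ultimately show "x \<in> (\<lambda>e. block_of \<P> ` e) ` {e \<in> edges F. block_of \<P> ` e \<in> edges S}"
    using \<open>x \<in> edges S\<close> by (metis (mono_tags, lifting) image_eqI mem_Collect_eq)
qed auto

lemma minor_hom_count_as_collapse_count:
  assumes F: "simple_graph F" and "is_minor M F"
  obtains T A k where "T \<subseteq> A" "A \<subseteq> edges F" "verts F = {} \<Longrightarrow> k = 0"
    "\<And>X. collapse_count F T A X = hom_count M X * card (verts X) ^ k"
proof -
  obtain \<P> S where part: "is_partition \<P> (verts F)" and conn: "\<forall>P\<in>\<P>. induced_connected F P"
    and sub: "subgraph S (quotient_graph F \<P>)" and iso: "graph_iso M S"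
    using assms(2) unfolding is_minor_def by blast
  have S: "simple_graph S" "verts S \<subseteq> \<P>" "edges S \<subseteq> edges (quotient_graph F \<P>)"
    using sub unfolding subgraph_def quotient_graph_def by auto
  define T where "T = {e \<in> edges F. \<exists>P\<in>\<P>. e \<subseteq> P}"
  define B where "B = {e \<in> edges F. block_of \<P> ` e \<in> edges S}"
  have T_sub: "T \<subseteq> edges F" "\<forall>e\<in>T. \<exists>P\<in>\<P>. e \<subseteq> P" and TB: "T \<union> B \<subseteq> edges F"
    unfolding T_def B_def by auto
  have T_conn: "\<forall>P\<in>\<P>. \<forall>u\<in>P. \<forall>v\<in>P. (\<lambda>x y. {x, y} \<in> T)\<^sup>*\<^sup>* u v"
  proof (intro ballI)
    fix P u v assume P: "P \<in> \<P>" "u \<in> P" "v \<in> P"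
    with conn have "induced_connected F P"
      by blast
    from reachable_in_connected_block[OF this P] show "(\<lambda>x y. {x, y} \<in> T)\<^sup>*\<^sup>* u v"
      unfolding T_def .
  qed
  have "block_of \<P> ` e \<notin> edges S" if "e \<in> T" for e
    using that block_image_of_edge_in_block[OF F part] simple_graph_singleton_notin_edges[OF S(1)]
    unfolding T_def by auto
  then have diff: "(T \<union> B) - T = B"
    unfolding B_def by blast
  have img: "(\<lambda>e. block_of \<P> ` e) ` B = edges S"
    unfolding B_def using part S(3) by (rule block_image_of_preimage_edges)
  have "verts S \<union> (\<P> - verts S) = \<P>"
    using S(2) by blast
  then have contr: "contraction \<P> B = (verts S \<union> (\<P> - verts S), edges S)"
    unfolding contraction_def img by simp
  have "collapse_count F T (T \<union> B) X = hom_count M X * card (verts X) ^ card (\<P> - verts S)" for X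
  proof -
    have "collapse_count F T (T \<union> B) X = hom_count (verts S \<union> (\<P> - verts S), edges S) X"
      using collapse_count_eq_hom_count_contraction[OF F part T_sub T_conn TB] unfolding diff contr .
    also have "\<dots> = hom_count (verts S, edges S) X * card (verts X) ^ card (\<P> - verts S)"
    proof (rule hom_count_add_isolated)
      show "finite (\<P> - verts S)"
        using part simple_graph_finite_verts[OF F] unfolding is_partition_def by (metis finite_Diff finite_UnionD)
    qed (use simple_graph_edgeD[OF S(1)] in auto)
    also have "hom_count (verts S, edges S) X = hom_count M X"
      using hom_count_graph_iso[OF iso, of X] by (simp add: verts_def edges_def)
    finally show ?thesis .
  qed
  moreover have "card (\<P> - verts S) = 0" if "verts F = {}"
  proof -
    from part that have "\<P> = {}"
      unfolding is_partition_def by auto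
    then show ?thesis
      by simp
  qed
  moreover have "T \<subseteq> T \<union> B"
    by blast
  ultimately show thesis
    using that TB by blast
qed

lemma hom_count_eq_if_padded_eq:
  fixes G H :: "'b graph"
  assumes G: "simple_graph G" and H: "simple_graph H"
    and eq: "hom_count S G * card (verts G) ^ k = hom_count S H * card (verts H) ^ k"
    and k: "k = 0 \<or> card (verts G) = card (verts H)"
  shows "hom_count S G = hom_count S H"
proof (cases "k = 0 \<or> card (verts G) \<noteq> 0")
  case True
  with eq k show ?thesis
    by auto
next
  case False
  with k G H have "verts G = {}" "verts H = {}"
    by (simp_all add: simple_graph_finite_verts)
  moreover from this have "edges G = {}" "edges H = {}"
    using G H unfolding simple_graph_def by auto
  ultimately have "G = H"
    by (simp add: graph_eqI)
  then show ?thesis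
    by simp
qed

lemma minor_in_if_complement_invariant:
  assumes closed: "hom_dist_closed \<F>"
    and compl: "\<forall>G H. simple_graph G \<longrightarrow> simple_graph H \<longrightarrow> hom_equiv \<F> G H \<longrightarrow>
      hom_equiv \<F> (complement G) (complement H)"
    and F: "F \<in> \<F>" and M: "simple_graph M" "is_minor M F"
  shows "M \<in> \<F>"
proof -
  have simp\<F>: "\<forall>F\<in>\<F>. simple_graph F"
    using closed unfolding hom_dist_closed_def hom_closure_def by blast
  then have "simple_graph F"
    using F by blast
  then obtain T A k where TA: "T \<subseteq> A" "A \<subseteq> edges F" and k: "verts F = {} \<Longrightarrow> k = 0"
    and count: "\<And>X :: nat graph. collapse_count F T A X = hom_count M X * card (verts X) ^ k"
    using minor_hom_count_as_collapse_count[OF _ M(2), where 'c = nat] by blast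
  have "hom_count M G = hom_count M H"
    if G: "simple_graph G" and H: "simple_graph H" and GH: "hom_equiv \<F> G H" for G H
  proof (rule hom_count_eq_if_padded_eq[OF G H])
    show "hom_count M G * card (verts G) ^ k = hom_count M H * card (verts H) ^ k"
      using collapse_count_eq_if_complement_invariant[OF simp\<F> compl F TA G H GH] count by simp
    have "card (verts G) ^ card (verts F) = card (verts H) ^ card (verts F)"
      using collapse_count_eq_if_complement_invariant[OF simp\<F> compl F _ _ G H GH, of "{}" "{}"]
      by (simp add: collapse_count_empty simple_graph_finite_verts \<open>simple_graph F\<close>)
    moreover have "card (verts F) > 0" if "verts F \<noteq> {}"
      using that \<open>simple_graph F\<close> by (simp add: card_gt_0_iff simple_graph_finite_verts)
    ultimately show "k = 0 \<or> card (verts G) = card (verts H)"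
      using k by (cases "verts F = {}") (simp_all add: power_eq_iff_eq_base)
  qed
  with M(1) have "M \<in> hom_closure \<F>"
    unfolding hom_closure_def by blast
  with closed show ?thesis
    unfolding hom_dist_closed_def by simp
qed

definition eq_or_adj_edges :: "'a graph \<Rightarrow> 'b graph \<Rightarrow> ('a \<Rightarrow> 'b) \<Rightarrow> 'a set set" where
  "eq_or_adj_edges F X g = {e \<in> edges F. eq_or_adj X g e}"

lemma homs_complement_eq:
  assumes F: "simple_graph F"
  shows "homs F (complement X) = {g \<in> verts F \<rightarrow>\<^sub>E verts X. eq_or_adj_edges F X g = {}}"
proof -
  have edges_iff: "(\<forall>u\<in>verts F. \<forall>v\<in>verts F. {u, v} \<in> edges F \<longrightarrow> P {u, v}) \<longleftrightarrow> (\<forall>e\<in>edges F. P e)" for P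
    using simple_graph_edgeE[OF F] simple_graph_edgeD[OF F] by metis
  have "g \<in> homs F (complement X) \<longleftrightarrow> (\<forall>e\<in>edges F. \<not> eq_or_adj X g e)"
    if g: "g \<in> verts F \<rightarrow>\<^sub>E verts X" for g
  proof -
    have "{g u, g v} \<in> edges (complement X) \<longleftrightarrow> \<not> eq_or_adj X g {u, v}" if "u \<in> verts F" "v \<in> verts F" for u v
      using g that by (auto simp: edge_complement_iff eq_or_adj_def PiE_iff)
    then have "g \<in> homs F (complement X) \<longleftrightarrow>
        (\<forall>u\<in>verts F. \<forall>v\<in>verts F. {u, v} \<in> edges F \<longrightarrow> \<not> eq_or_adj X g {u, v})"
      using g unfolding homs_def by simp
    also have "\<dots> \<longleftrightarrow> (\<forall>e\<in>edges F. \<not> eq_or_adj X g e)"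
      by (rule edges_iff)
    finally show ?thesis .
  qed
  moreover have "homs F (complement X) \<subseteq> verts F \<rightarrow>\<^sub>E verts X"
    unfolding homs_def by auto
  ultimately show ?thesis
    unfolding eq_or_adj_edges_def by blast
qed

lemma card_relaxed_homs_eq_sum_patterns:
  assumes fin: "finite (verts F)" "finite (verts X)" "finite (edges F)" and A: "A \<subseteq> edges F"
  shows "card (relaxed_homs F A A X) =
    (\<Sum>B | A \<subseteq> B \<and> B \<subseteq> edges F. card {g \<in> verts F \<rightarrow>\<^sub>E verts X. eq_or_adj_edges F X g = B})"
proof -
  have "relaxed_homs F A A X =
      (\<Union>B\<in>{B. A \<subseteq> B \<and> B \<subseteq> edges F}. {g \<in> verts F \<rightarrow>\<^sub>E verts X. eq_or_adj_edges F X g = B})"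
    using A unfolding relaxed_homs_def eq_or_adj_edges_def by auto
  also have "card \<dots> =
      (\<Sum>B | A \<subseteq> B \<and> B \<subseteq> edges F. card {g \<in> verts F \<rightarrow>\<^sub>E verts X. eq_or_adj_edges F X g = B})"
  proof (rule card_UN_disjoint)
    show "finite {B. A \<subseteq> B \<and> B \<subseteq> edges F}"
      by (rule finite_subset[of _ "Pow (edges F)"]) (auto simp: fin(3))
    show "\<forall>B\<in>{B. A \<subseteq> B \<and> B \<subseteq> edges F}. finite {g \<in> verts F \<rightarrow>\<^sub>E verts X. eq_or_adj_edges F X g = B}"
    proof
      fix B
      show "finite {g \<in> verts F \<rightarrow>\<^sub>E verts X. eq_or_adj_edges F X g = B}"
        by (rule finite_subset[of _ "verts F \<rightarrow>\<^sub>E verts X"]) (auto simp: finite_PiE fin)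
    qed
    show "\<forall>B\<in>{B. A \<subseteq> B \<and> B \<subseteq> edges F}. \<forall>B'\<in>{B. A \<subseteq> B \<and> B \<subseteq> edges F}. B \<noteq> B' \<longrightarrow>
        {g \<in> verts F \<rightarrow>\<^sub>E verts X. eq_or_adj_edges F X g = B} \<inter>
        {g \<in> verts F \<rightarrow>\<^sub>E verts X. eq_or_adj_edges F X g = B'} = {}"
      by auto
  qed
  finally show ?thesis .
qed

text \<open>Inverting the sums over supersets is a Moebius inversion on the lattice of edge sets,
  carried out as a downward induction on \<open>A\<close>.\<close>
lemma pattern_count_eq_if_collapse_count_eq:
  fixes G H :: "'b graph"
  assumes F: "simple_graph F" and G: "simple_graph G" and H: "simple_graph H"
    and eq: "\<And>T A. T \<subseteq> A \<Longrightarrow> A \<subseteq> edges F \<Longrightarrow> collapse_count F T A G = collapse_count F T A H"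
  shows "A \<subseteq> edges F \<Longrightarrow>
    card {g \<in> verts F \<rightarrow>\<^sub>E verts G. eq_or_adj_edges F G g = A} =
    card {g \<in> verts F \<rightarrow>\<^sub>E verts H. eq_or_adj_edges F H g = A}"
proof (induction "card (edges F - A)" arbitrary: A rule: less_induct)
  case less
  let ?pattern = "\<lambda>X B. card {g \<in> verts F \<rightarrow>\<^sub>E verts X. eq_or_adj_edges F X g = B}"
  let ?above = "{B. A \<subseteq> B \<and> B \<subseteq> edges F} - {A}"
  have fin: "finite (verts F)" "finite (verts G)" "finite (verts H)" "finite (edges F)"
    using F G H by (simp_all add: simple_graph_finite_verts simple_graph_finite_edges)
  have "finite A"
    using less.prems fin(4) by (rule finite_subset)
  then have relaxed: "card (relaxed_homs F A A G) = card (relaxed_homs F A A H)"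
    using card_relaxed_homs[OF G fin(1,2)] card_relaxed_homs[OF H fin(1,3)] eq less.prems by simp
  have split: "card (relaxed_homs F A A X) = ?pattern X A + (\<Sum>B\<in>?above. ?pattern X B)"
    if "finite (verts X)" for X :: "'b graph"
  proof -
    have "finite {B. A \<subseteq> B \<and> B \<subseteq> edges F}"
      by (rule finite_subset[of _ "Pow (edges F)"]) (auto simp: fin(4))
    then show ?thesis
      unfolding card_relaxed_homs_eq_sum_patterns[OF fin(1) that fin(4) less.prems]
      using less.prems by (subst sum.remove[of _ A]) auto
  qed
  have "(\<Sum>B\<in>?above. ?pattern G B) = (\<Sum>B\<in>?above. ?pattern H B)"
  proof (rule sum.cong[OF refl])
    fix B assume B: "B \<in> ?above"
    then have "card (edges F - B) < card (edges F - A)"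
      using fin(4) by (intro psubset_card_mono) auto
    with B show "?pattern G B = ?pattern H B"
      using less.hyps by blast
  qed
  with relaxed split[OF fin(2)] split[OF fin(3)] show ?case
    by simp
qed

lemma hom_equiv_complement_if_minor_closed:
  assumes closed: "minor_closed \<F>" and simp\<F>: "\<forall>F\<in>\<F>. simple_graph F"
    and G: "simple_graph G" and H: "simple_graph H" and GH: "hom_equiv \<F> G H"
  shows "hom_equiv \<F> (complement G) (complement H)"
  unfolding hom_equiv_def
proof
  fix F assume "F \<in> \<F>"
  with simp\<F> have F: "simple_graph F"
    by blast
  have "collapse_count F T A G = collapse_count F T A H" if "T \<subseteq> A" "A \<subseteq> edges F" for T A
    using collapse_count_zero_or_minor[OF F that]
  proof
    assume zero: "\<forall>X :: nat graph. simple_graph X \<longrightarrow> collapse_count F T A X = 0"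
    show ?thesis
      using zero[rule_format, OF G] zero[rule_format, OF H] by simp
  next
    assume "\<exists>M :: nat graph. simple_graph M \<and> is_minor M F \<and> (\<forall>X :: nat graph. collapse_count F T A X = hom_count M X)"
    then obtain M :: "nat graph" where "M \<in> \<F>" and M: "\<forall>X :: nat graph. collapse_count F T A X = hom_count M X"
      using closed \<open>F \<in> \<F>\<close> unfolding minor_closed_def by blast
    with GH have "hom_count M G = hom_count M H"
      unfolding hom_equiv_def by blast
    then show ?thesis
      using spec[OF M, of G] spec[OF M, of H] by simp
  qed
  then show "hom_count F (complement G) = hom_count F (complement H)"
    using pattern_count_eq_if_collapse_count_eq[OF F G H, of "{}"]
    unfolding hom_count_def homs_complement_eq[OF F] by simp
qed

theorem theorem2:
  fixes \<F> :: "nat graph set"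
  assumes "hom_dist_closed \<F>"
  shows "minor_closed \<F> \<longleftrightarrow>
    (\<forall>G H. simple_graph G \<longrightarrow> simple_graph H \<longrightarrow>
       (hom_equiv \<F> G H \<longleftrightarrow> hom_equiv \<F> (complement G) (complement H)))"
proof
  assume closed: "minor_closed \<F>"
  have simp\<F>: "\<forall>F\<in>\<F>. simple_graph F"
    using assms unfolding hom_dist_closed_def hom_closure_def by blast
  show "\<forall>G H. simple_graph G \<longrightarrow> simple_graph H \<longrightarrow>
      (hom_equiv \<F> G H \<longleftrightarrow> hom_equiv \<F> (complement G) (complement H))"
  proof (intro allI impI)
    fix G H :: "nat graph" assume G: "simple_graph G" and H: "simple_graph H"
    show "hom_equiv \<F> G H \<longleftrightarrow> hom_equiv \<F> (complement G) (complement H)"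
      using hom_equiv_complement_if_minor_closed[OF closed simp\<F> G H]
        hom_equiv_complement_if_minor_closed[OF closed simp\<F> simple_graph_complement[OF G]
          simple_graph_complement[OF H]]
      by (auto simp: complement_complement G H)
  qed
next
  assume "\<forall>G H. simple_graph G \<longrightarrow> simple_graph H \<longrightarrow>
      (hom_equiv \<F> G H \<longleftrightarrow> hom_equiv \<F> (complement G) (complement H))"
  then show "minor_closed \<F>"
    unfolding minor_closed_def using minor_in_if_complement_invariant[OF assms] by blast
qed

end
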